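(* Fix integers $d\ge2$, $r\ge1$ and $M>0$. There exist constants $C,c>0$ depending only on $d,r,M$ such that for all sufficiently large $n$ the following holds. Let $\{|j\rangle\}_{j=1}^{D}$, $D=d^n$, be any orthonormal basis of $(\mathbb C^d)^{\otimes n}$ consisting of eigenvectors of the translation operator $\mathcal T$ (for instance, an eigenbasis of a translation-invariant Hamiltonian with non-degenerate spectrum). Let $A$ be a traceless $r$-local operator with $\|A\|\le M$, and $A_{jj}:=\langle j|A|j\rangle$. Then for every $\delta\ge C\sqrt{(\log n)/n}$, $$\frac{|\{j: |A_{jj}|\ge\delta\}|}{D}\le e^{-cn\delta^2}.$$
   Context: $\mathcal T$ is the unitary lattice translation operator on $(\mathbb C^d)^{\otimes n}$, defined on computational basis states by $\mathcal T(|x_1\rangle\otimes\cdots\otimes|x_n\rangle)=|x_n\rangle\otimes|x_1\rangle\otimes\cdots\otimes|x_{n-1}\rangle$. An operator is $r$-local if it acts nontrivially only on at most $r$ cyclically consecutive sites. $\|\cdot\|$ is the operator norm. *)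

theory Defs
  imports "HOL-Analysis.Analysis"
begin

text \<open>Computational basis configurations of n sites with local dimension d
  (sites 0..n-1, local states 0..d-1). A state vector of (C^d)^{\<otimes> n} is a
  function from configurations to complex amplitudes; an operator is a matrix
  indexed by pairs of configurations. Only values on configurations matter.\<close>

definition configs :: "nat \<Rightarrow> nat \<Rightarrow> (nat \<Rightarrow> nat) set" where
  "configs n d = {0..<n} \<rightarrow>\<^sub>E {0..<d}"

definition inner_st :: "nat \<Rightarrow> nat \<Rightarrow> ((nat \<Rightarrow> nat) \<Rightarrow> complex) \<Rightarrow> ((nat \<Rightarrow> nat) \<Rightarrow> complex) \<Rightarrow> complex" where
  "inner_st n d \<phi> \<psi> = (\<Sum>x\<in>configs n d. cnj (\<phi> x) * \<psi> x)"

definition vnorm :: "nat \<Rightarrow> nat \<Rightarrow> ((nat \<Rightarrow> nat) \<Rightarrow> complex) \<Rightarrow> real" where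
  "vnorm n d \<psi> = sqrt (\<Sum>x\<in>configs n d. (cmod (\<psi> x))\<^sup>2)"

definition apply_op :: "nat \<Rightarrow> nat \<Rightarrow> ((nat \<Rightarrow> nat) \<Rightarrow> (nat \<Rightarrow> nat) \<Rightarrow> complex) \<Rightarrow> ((nat \<Rightarrow> nat) \<Rightarrow> complex) \<Rightarrow> ((nat \<Rightarrow> nat) \<Rightarrow> complex)" where
  "apply_op n d A \<psi> = (\<lambda>x. \<Sum>y\<in>configs n d. A x y * \<psi> y)"

definition op_norm :: "nat \<Rightarrow> nat \<Rightarrow> ((nat \<Rightarrow> nat) \<Rightarrow> (nat \<Rightarrow> nat) \<Rightarrow> complex) \<Rightarrow> real" where
  "op_norm n d A = (SUP \<psi>\<in>{\<psi>. vnorm n d \<psi> \<le> 1}. vnorm n d (apply_op n d A \<psi>))"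

definition trace_op :: "nat \<Rightarrow> nat \<Rightarrow> ((nat \<Rightarrow> nat) \<Rightarrow> (nat \<Rightarrow> nat) \<Rightarrow> complex) \<Rightarrow> complex" where
  "trace_op n d A = (\<Sum>x\<in>configs n d. A x x)"

text \<open>Lattice translation T |x_1..x_n> = |x_n x_1 .. x_{n-1}>, i.e. the basis state x is
  sent to y with y_i = x_{i-1 mod n}. Hence (T psi)(y) = psi(x) with x_i = y_{(i+1) mod n}.\<close>
definition translate :: "nat \<Rightarrow> ((nat \<Rightarrow> nat) \<Rightarrow> complex) \<Rightarrow> ((nat \<Rightarrow> nat) \<Rightarrow> complex)" where
  "translate n \<psi> = (\<lambda>y. \<psi> (\<lambda>i\<in>{0..<n}. y ((i + 1) mod n)))"

definition is_T_eigenvector :: "nat \<Rightarrow> nat \<Rightarrow> ((nat \<Rightarrow> nat) \<Rightarrow> complex) \<Rightarrow> bool" where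
  "is_T_eigenvector n d \<psi> \<longleftrightarrow>
     (\<exists>x\<in>configs n d. \<psi> x \<noteq> 0) \<and>
     (\<exists>\<mu>. \<forall>y\<in>configs n d. translate n \<psi> y = \<mu> * \<psi> y)"

text \<open>A acts as A_S \<otimes> I on the site set S.\<close>
definition acts_only_on :: "nat \<Rightarrow> nat \<Rightarrow> nat set \<Rightarrow> ((nat \<Rightarrow> nat) \<Rightarrow> (nat \<Rightarrow> nat) \<Rightarrow> complex) \<Rightarrow> bool" where
  "acts_only_on n d S A \<longleftrightarrow>
     (\<exists>a :: (nat \<Rightarrow> nat) \<Rightarrow> (nat \<Rightarrow> nat) \<Rightarrow> complex.
        \<forall>x\<in>configs n d. \<forall>y\<in>configs n d.
          A x y = (if (\<forall>i<n. i \<notin> S \<longrightarrow> x i = y i)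
                   then a (restrict x (S \<inter> {0..<n})) (restrict y (S \<inter> {0..<n})) else 0))"

text \<open>r-local: acts nontrivially only on r cyclically consecutive sites
  (acting on fewer consecutive sites is included in this).\<close>
definition r_local :: "nat \<Rightarrow> nat \<Rightarrow> nat \<Rightarrow> ((nat \<Rightarrow> nat) \<Rightarrow> (nat \<Rightarrow> nat) \<Rightarrow> complex) \<Rightarrow> bool" where
  "r_local n d r A \<longleftrightarrow>
     (\<exists>s<n. acts_only_on n d {(s + k) mod n | k. k < r} A)"

definition diag_elem :: "nat \<Rightarrow> nat \<Rightarrow> ((nat \<Rightarrow> nat) \<Rightarrow> complex) \<Rightarrow> ((nat \<Rightarrow> nat) \<Rightarrow> (nat \<Rightarrow> nat) \<Rightarrow> complex) \<Rightarrow> complex" where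
  "diag_elem n d v A = inner_st n d v (apply_op n d A v)"

end

theory Submission
  imports Defs
begin

text \<open>
  Translation invariance of the eigenbasis makes every diagonal element \<open>A\<^sub>j\<^sub>j\<close> equal to the
  diagonal element of each of the \<open>n\<close> translates \<open>\<T>\<^sup>t A \<T>\<^sup>-\<^sup>t\<close>, so \<open>n A\<^sub>j\<^sub>j\<close> is the diagonal
  element of their sum. The translates split into \<open>2r\<close> groups of operators with pairwise disjoint
  supports. For one group \<open>G\<close>, iterating Cauchy-Schwarz gives
  \<open>\<Sum>\<^sub>j |\<langle>j|G|j\<rangle>|\<^sup>2\<^sup>q \<le> |tr W|\<close> for a word \<open>W\<close> of length \<open>2q\<close> in \<open>G\<close> and \<open>G\<^sup>\<dagger>\<close>. Expanding
  \<open>W\<close>, every term in which some translate occurs only once is traceless, and the remaining words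
  number at most \<open>4\<^sup>q (n q)\<^sup>q\<close>, which yields a Gaussian moment bound. Markov's inequality with
  \<open>q \<approx> n \<delta>\<^sup>2\<close> and a union bound over the groups finish the proof.
\<close>

type_synonym config = "nat \<Rightarrow> nat"
type_synonym state = "config \<Rightarrow> complex"
type_synonym operator = "config \<Rightarrow> config \<Rightarrow> complex"

section \<open>Matrix calculus on the configuration space\<close>

definition op_mult :: "nat \<Rightarrow> nat \<Rightarrow> operator \<Rightarrow> operator \<Rightarrow> operator" where
  "op_mult n d X Y = (\<lambda>x z. \<Sum>y\<in>configs n d. X x y * Y y z)"

definition op_adjoint :: "operator \<Rightarrow> operator" where
  "op_adjoint X = (\<lambda>x y. cnj (X y x))"

definition op_sum :: "'i set \<Rightarrow> ('i \<Rightarrow> operator) \<Rightarrow> operator" where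
  "op_sum K F = (\<lambda>x y. \<Sum>t\<in>K. F t x y)"

lemma finite_configs [simp]: "finite (configs n d)"
  unfolding configs_def by (simp add: finite_PiE)

lemma card_configs: "card (configs n d) = d ^ n"
  unfolding configs_def by (simp add: card_PiE)

lemma configs_undefined: "x \<in> configs n d \<Longrightarrow> \<not> i < n \<Longrightarrow> x i = undefined"
  unfolding configs_def PiE_def extensional_def by auto

lemma configs_neqE:
  assumes "x \<in> configs n d" "y \<in> configs n d" "x \<noteq> y"
  obtains i where "i < n" "x i \<noteq> y i"
  using assms configs_undefined by (metis ext)

lemma override_on_configs:
  "x \<in> configs n d \<Longrightarrow> w \<in> configs n d \<Longrightarrow> override_on x w T \<in> configs n d"
  unfolding configs_def override_on_def by (auto simp: PiE_iff extensional_def)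

lemma op_mult_assoc: "op_mult n d (op_mult n d X Y) Z = op_mult n d X (op_mult n d Y Z)"
  unfolding op_mult_def
  by (auto simp: fun_eq_iff sum_distrib_left sum_distrib_right mult.assoc intro: sum.swap[THEN trans])

lemma apply_op_mult: "apply_op n d (op_mult n d X Y) \<psi> = apply_op n d X (apply_op n d Y \<psi>)"
  unfolding op_mult_def apply_op_def
  by (auto simp: fun_eq_iff sum_distrib_left sum_distrib_right mult.assoc intro: sum.swap[THEN trans])

lemma apply_op_sum: "apply_op n d (op_sum K X) v = (\<lambda>x. \<Sum>t\<in>K. apply_op n d (X t) v x)"
  unfolding apply_op_def op_sum_def by (rule ext) (simp add: sum_distrib_right, rule sum.swap)

lemma apply_op_scaleC: "apply_op n d A (\<lambda>x. c * \<psi> x) = (\<lambda>x. c * apply_op n d A \<psi> x)"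
  unfolding apply_op_def by (simp add: sum_distrib_left mult_ac)

lemma op_adjoint_adjoint [simp]: "op_adjoint (op_adjoint X) = X"
  by (simp add: op_adjoint_def)

lemma op_adjoint_mult: "op_adjoint (op_mult n d X Y) = op_mult n d (op_adjoint Y) (op_adjoint X)"
  unfolding op_adjoint_def op_mult_def by (auto simp: fun_eq_iff mult.commute)

lemma op_adjoint_sum: "op_adjoint (op_sum K X) = op_sum K (\<lambda>t. op_adjoint (X t))"
  unfolding op_adjoint_def op_sum_def by simp

lemma trace_op_mult_commute: "trace_op n d (op_mult n d X Y) = trace_op n d (op_mult n d Y X)"
  unfolding trace_op_def op_mult_def by (subst sum.swap) (simp add: mult.commute)

lemma trace_op_adjoint: "trace_op n d (op_adjoint X) = cnj (trace_op n d X)"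
  unfolding trace_op_def op_adjoint_def by simp

lemma trace_op_sum: "trace_op n d (op_sum K F) = (\<Sum>t\<in>K. trace_op n d (F t))"
  unfolding trace_op_def op_sum_def by (rule sum.swap)

lemma cnj_mult_self: "cnj z * z = complex_of_real ((cmod z)\<^sup>2)"
  by (metis complex_norm_square mult.commute)

lemma trace_op_adjoint_mult_self:
  "trace_op n d (op_mult n d (op_adjoint W) W) =
     complex_of_real (\<Sum>x\<in>configs n d. \<Sum>y\<in>configs n d. (cmod (W x y))\<^sup>2)"
  unfolding trace_op_def op_mult_def op_adjoint_def
  by (subst sum.swap) (simp add: of_real_sum cnj_mult_self)

lemma vnorm_nonneg: "vnorm n d \<psi> \<ge> 0"
  unfolding vnorm_def by (intro real_sqrt_ge_zero sum_nonneg) simp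

lemma vnorm_power2: "(vnorm n d \<psi>)\<^sup>2 = (\<Sum>x\<in>configs n d. (cmod (\<psi> x))\<^sup>2)"
  unfolding vnorm_def by (intro real_sqrt_pow2 sum_nonneg) simp

lemma vnorm_cong: "(\<And>x. x \<in> configs n d \<Longrightarrow> f x = g x) \<Longrightarrow> vnorm n d f = vnorm n d g"
  unfolding vnorm_def by simp

lemma vnorm_scaleC: "vnorm n d (\<lambda>x. c * \<psi> x) = cmod c * vnorm n d \<psi>"
  unfolding vnorm_def
  by (simp add: norm_mult power_mult_distrib sum_distrib_left[symmetric] real_sqrt_mult)

lemma norm_le_vnorm: "x \<in> configs n d \<Longrightarrow> cmod (\<psi> x) \<le> vnorm n d \<psi>"
  unfolding vnorm_def
  by (rule real_le_rsqrt, rule member_le_sum) auto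

lemma inner_st_self: "inner_st n d \<psi> \<psi> = complex_of_real ((vnorm n d \<psi>)\<^sup>2)"
  unfolding vnorm_power2 inner_st_def by (simp add: cnj_mult_self of_real_sum)

lemma norm_inner_st_self: "cmod (inner_st n d \<psi> \<psi>) = (vnorm n d \<psi>)\<^sup>2"
  unfolding inner_st_self norm_of_real by simp

lemma vnorm_eq_1: "inner_st n d v v = 1 \<Longrightarrow> vnorm n d v = 1"
  using norm_inner_st_self[of n d v] vnorm_nonneg[of n d v] by (simp add: power2_eq_1_iff)

lemma inner_st_Cauchy_Schwarz: "cmod (inner_st n d \<phi> \<psi>) \<le> vnorm n d \<phi> * vnorm n d \<psi>"
proof -
  have "cmod (inner_st n d \<phi> \<psi>) \<le> (\<Sum>x\<in>configs n d. cmod (\<phi> x) * cmod (\<psi> x))"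
    unfolding inner_st_def by (rule order_trans[OF norm_sum]) (simp add: norm_mult)
  also have "\<dots> \<le> vnorm n d \<phi> * vnorm n d \<psi>"
  proof -
    have "(\<Sum>x\<in>configs n d. cmod (\<phi> x) * cmod (\<psi> x))\<^sup>2 \<le> (vnorm n d \<phi> * vnorm n d \<psi>)\<^sup>2"
      unfolding power_mult_distrib vnorm_power2 by (rule Cauchy_Schwarz_ineq_sum)
    then show ?thesis
      using vnorm_nonneg by (meson mult_nonneg_nonneg power2_le_imp_le)
  qed
  finally show ?thesis .
qed

lemma inner_st_adjoint:
  "inner_st n d (apply_op n d X \<phi>) \<psi> = inner_st n d \<phi> (apply_op n d (op_adjoint X) \<psi>)"
  unfolding inner_st_def apply_op_def op_adjoint_def
  by (auto simp: sum_distrib_left sum_distrib_right mult_ac intro: sum.swap[THEN trans])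

lemma inner_st_commute: "inner_st n d \<psi> \<phi> = cnj (inner_st n d \<phi> \<psi>)"
  unfolding inner_st_def by (simp add: mult.commute)

lemma inner_st_diff_left: "inner_st n d (\<lambda>y. a y - b y) \<psi> = inner_st n d a \<psi> - inner_st n d b \<psi>"
  unfolding inner_st_def by (simp add: left_diff_distrib sum_subtractf)

lemma inner_st_diff_right: "inner_st n d \<phi> (\<lambda>y. a y - b y) = inner_st n d \<phi> a - inner_st n d \<phi> b"
  unfolding inner_st_def by (simp add: right_diff_distrib sum_subtractf)

lemma inner_st_sum_left: "inner_st n d (\<lambda>y. \<Sum>j\<in>J. f j y) \<psi> = (\<Sum>j\<in>J. inner_st n d (f j) \<psi>)"
  unfolding inner_st_def by (simp add: sum_distrib_right) (rule sum.swap)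

lemma inner_st_sum_right: "inner_st n d \<phi> (\<lambda>y. \<Sum>j\<in>J. f j y) = (\<Sum>j\<in>J. inner_st n d \<phi> (f j))"
  unfolding inner_st_def by (simp add: sum_distrib_left) (rule sum.swap)

lemma inner_st_scaleC_left: "inner_st n d (\<lambda>y. c * f y) \<psi> = cnj c * inner_st n d f \<psi>"
  unfolding inner_st_def by (simp add: sum_distrib_left mult_ac)

lemma inner_st_scaleC_right: "inner_st n d \<phi> (\<lambda>y. c * f y) = c * inner_st n d \<phi> f"
  unfolding inner_st_def by (simp add: sum_distrib_left mult_ac)

lemma diag_elem_op_sum: "diag_elem n d \<psi> (op_sum K X) = (\<Sum>t\<in>K. diag_elem n d \<psi> (X t))"
  unfolding diag_elem_def apply_op_sum by (rule inner_st_sum_right)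

fun op_prod :: "nat \<Rightarrow> nat \<Rightarrow> (nat \<Rightarrow> operator) \<Rightarrow> nat \<Rightarrow> operator" where
  "op_prod n d F 0 = F 0"
| "op_prod n d F (Suc k) = op_mult n d (op_prod n d F k) (F (Suc k))"

lemma op_prod_cong: "(\<And>i. i \<le> k \<Longrightarrow> F i = G i) \<Longrightarrow> op_prod n d F k = op_prod n d G k"
  by (induction k) auto

lemma op_prod_Suc_left: "op_prod n d F (Suc k) = op_mult n d (F 0) (op_prod n d (\<lambda>i. F (Suc i)) k)"
proof (induction k)
  case (Suc k)
  then show ?case by (simp add: op_mult_assoc)
qed simp

lemma op_mult_op_prod:
  "op_mult n d (op_prod n d F k) (op_prod n d G l) =
     op_prod n d (\<lambda>i. if i \<le> k then F i else G (i - Suc k)) (k + Suc l)"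
proof (induction l)
  case 0
  have "op_prod n d F k = op_prod n d (\<lambda>i. if i \<le> k then F i else G (i - Suc k)) k"
    by (rule op_prod_cong) simp
  then show ?case by simp
next
  case (Suc l)
  have "op_mult n d (op_prod n d F k) (op_prod n d G (Suc l)) =
      op_mult n d (op_mult n d (op_prod n d F k) (op_prod n d G l)) (G (Suc l))"
    by (simp add: op_mult_assoc)
  then show ?case using Suc by (simp add: Suc_diff_le)
qed

lemma op_adjoint_prod: "op_adjoint (op_prod n d F k) = op_prod n d (\<lambda>i. op_adjoint (F (k - i))) k"
proof (induction k)
  case (Suc k)
  then have "op_adjoint (op_prod n d F (Suc k)) =
      op_mult n d (op_adjoint (F (Suc k))) (op_prod n d (\<lambda>i. op_adjoint (F (k - i))) k)"
    by (simp add: op_adjoint_mult)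
  also have "\<dots> = op_prod n d (\<lambda>i. op_adjoint (F (Suc k - i))) (Suc k)"
    by (subst op_prod_Suc_left) simp
  finally show ?case .
qed simp

lemma vnorm_apply_op_prod_le:
  assumes "M \<ge> 0" and "\<And>i \<psi>. i \<le> k \<Longrightarrow> vnorm n d (apply_op n d (F i) \<psi>) \<le> M * vnorm n d \<psi>"
  shows "vnorm n d (apply_op n d (op_prod n d F k) \<psi>) \<le> M ^ Suc k * vnorm n d \<psi>"
  using assms(2)
proof (induction k arbitrary: \<psi>)
  case (Suc k)
  have "vnorm n d (apply_op n d (op_prod n d F (Suc k)) \<psi>)
      \<le> M ^ Suc k * vnorm n d (apply_op n d (F (Suc k)) \<psi>)"
    using Suc by (simp add: apply_op_mult)
  also have "\<dots> \<le> M ^ Suc k * (M * vnorm n d \<psi>)"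
    using Suc.prems[of "Suc k" \<psi>] assms(1) by (intro mult_left_mono) auto
  finally show ?case by (simp add: mult_ac)
qed simp

lemma trace_op_prod_rotate_1:
  "trace_op n d (op_prod n d F (Suc k)) =
     trace_op n d (op_prod n d (\<lambda>i. F ((i + 1) mod Suc (Suc k))) (Suc k))"
proof -
  have "trace_op n d (op_prod n d F (Suc k)) =
      trace_op n d (op_mult n d (op_prod n d (\<lambda>i. F (Suc i)) k) (F 0))"
    by (subst op_prod_Suc_left) (rule trace_op_mult_commute)
  also have "op_prod n d (\<lambda>i. F (Suc i)) k = op_prod n d (\<lambda>i. F ((i + 1) mod Suc (Suc k))) k"
    by (rule op_prod_cong) simp
  finally show ?thesis by simp
qed

lemma trace_op_prod_rotate:
  "trace_op n d (op_prod n d F k) = trace_op n d (op_prod n d (\<lambda>i. F ((i + s) mod Suc k)) k)"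
proof (cases k)
  case (Suc k')
  show ?thesis
  proof (induction s)
    case 0
    have "op_prod n d F k = op_prod n d (\<lambda>i. F ((i + 0) mod Suc k)) k"
      by (rule op_prod_cong) simp
    then show ?case by simp
  next
    case (Suc s)
    have "trace_op n d (op_prod n d (\<lambda>i. F ((i + s) mod Suc k)) k)
        = trace_op n d (op_prod n d (\<lambda>i. F (((i + 1) mod Suc k + s) mod Suc k)) k)"
      using trace_op_prod_rotate_1[of n d "\<lambda>i. F ((i + s) mod Suc k)" k'] \<open>k = Suc k'\<close>
      by (simp del: op_prod.simps)
    also have "op_prod n d (\<lambda>i. F (((i + 1) mod Suc k + s) mod Suc k)) k
        = op_prod n d (\<lambda>i. F ((i + Suc s) mod Suc k)) k"
      by (rule op_prod_cong) (simp add: mod_add_left_eq)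
    finally show ?case using Suc.IH by simp
  qed
qed simp

lemma sum_PiE_insert:
  assumes "x \<notin> S"
  shows "sum f (Pi\<^sub>E (insert x S) T) = (\<Sum>y\<in>T x. \<Sum>g\<in>Pi\<^sub>E S T. f (g(x := y)))"
  unfolding PiE_insert_eq
  by (subst sum.reindex[OF inj_combinator[OF assms]]) (simp add: sum.cartesian_product case_prod_beta)

lemma op_prod_op_sum:
  "op_prod n d (\<lambda>i. op_sum K (\<Phi> i)) k =
     op_sum ({0..k} \<rightarrow>\<^sub>E K) (\<lambda>\<tau>. op_prod n d (\<lambda>i. \<Phi> i (\<tau> i)) k)"
proof (induction k)
  case 0
  have "{0..0::nat} = insert 0 {}" by auto
  then show ?case unfolding op_sum_def by (auto simp: fun_eq_iff sum_PiE_insert)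
next
  case (Suc k)
  have split: "{0..Suc k} = insert (Suc k) {0..k}" by auto
  have cong: "op_prod n d (\<lambda>i. \<Phi> i (if i = Suc k then t else \<tau> i)) k = op_prod n d (\<lambda>i. \<Phi> i (\<tau> i)) k"
    for \<tau> t by (rule op_prod_cong) simp
  have swap: "(\<Sum>y\<in>A. \<Sum>i\<in>C. \<Sum>j\<in>B. f y j i) = (\<Sum>i\<in>C. \<Sum>j\<in>B. \<Sum>y\<in>A. f y j i)"
    for A B C and f :: "_ \<Rightarrow> _ \<Rightarrow> _ \<Rightarrow> complex"
    by (subst sum.swap) (intro sum.cong refl sum.swap)
  show ?case
    unfolding split op_sum_def
    apply (simp add: Suc[unfolded op_sum_def] sum_PiE_insert cong)
    apply (simp add: op_mult_def fun_eq_iff sum_distrib_left sum_distrib_right)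
    by (intro allI swap)
qed

section \<open>Operators acting on disjoint sets of sites\<close>

text \<open>\<open>identity_on n d T Z\<close> says that \<open>Z = I\<^sub>T \<otimes> Z'\<close>: \<open>Z\<close> is diagonal in the sites of \<open>T\<close>
  and does not depend on the common value of those sites.\<close>

definition identity_on :: "nat \<Rightarrow> nat \<Rightarrow> nat set \<Rightarrow> operator \<Rightarrow> bool" where
  "identity_on n d T Z \<longleftrightarrow>
    (\<forall>x\<in>configs n d. \<forall>y\<in>configs n d. (\<exists>i\<in>T. x i \<noteq> y i) \<longrightarrow> Z x y = 0) \<and>
    (\<forall>x\<in>configs n d. \<forall>y\<in>configs n d. \<forall>w\<in>configs n d. (\<forall>i\<in>T. x i = y i) \<longrightarrow>
       Z (override_on x w T) (override_on y w T) = Z x y)"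

lemma identity_on_offdiag:
  "identity_on n d T Z \<Longrightarrow> x \<in> configs n d \<Longrightarrow> y \<in> configs n d \<Longrightarrow> i \<in> T \<Longrightarrow> x i \<noteq> y i \<Longrightarrow>
    Z x y = 0"
  unfolding identity_on_def by blast

lemma identity_on_override:
  "identity_on n d T Z \<Longrightarrow> x \<in> configs n d \<Longrightarrow> y \<in> configs n d \<Longrightarrow> w \<in> configs n d \<Longrightarrow>
    (\<And>i. i \<in> T \<Longrightarrow> x i = y i) \<Longrightarrow> Z (override_on x w T) (override_on y w T) = Z x y"
  unfolding identity_on_def by blast

lemma op_mult_eq_sum_fibre:
  assumes X: "identity_on n d T X" and x: "x \<in> configs n d"
  shows "op_mult n d X Y x z = (\<Sum>y\<in>{y \<in> configs n d. \<forall>i\<in>T. y i = x i}. X x y * Y y z)"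
  unfolding op_mult_def
proof (rule sum.mono_neutral_right)
  show "\<forall>y\<in>configs n d - {y \<in> configs n d. \<forall>i\<in>T. y i = x i}. X x y * Y y z = 0"
    using identity_on_offdiag[OF X x] by fastforce
qed auto

lemma identity_on_op_mult:
  assumes X: "identity_on n d T X" and Y: "identity_on n d T Y"
  shows "identity_on n d T (op_mult n d X Y)"
  unfolding identity_on_def
proof (intro conjI ballI impI)
  fix x z assume x: "x \<in> configs n d" and z: "z \<in> configs n d" and "\<exists>i\<in>T. x i \<noteq> z i"
  then obtain i where i: "i \<in> T" "x i \<noteq> z i" by blast
  have "X x y * Y y z = 0" if "y \<in> configs n d" for y
    using identity_on_offdiag[OF X x that i(1)] identity_on_offdiag[OF Y that z i(1)] i(2)
    by (cases "x i = y i") auto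
  then show "op_mult n d X Y x z = 0"
    unfolding op_mult_def by (intro sum.neutral) blast
next
  fix x z w assume x: "x \<in> configs n d" and z: "z \<in> configs n d" and w: "w \<in> configs n d"
    and xz: "\<forall>i\<in>T. x i = z i"
  let ?ov = "\<lambda>u v. override_on u v T"
  have "(\<Sum>y\<in>{y \<in> configs n d. \<forall>i\<in>T. y i = x i}. X x y * Y y z) =
      (\<Sum>y\<in>{y \<in> configs n d. \<forall>i\<in>T. y i = ?ov x w i}. X (?ov x w) y * Y y (?ov z w))"
  proof (rule sum.reindex_bij_witness[where i="\<lambda>y. ?ov y x" and j="\<lambda>y. ?ov y w"])
    fix a assume "a \<in> {y \<in> configs n d. \<forall>i\<in>T. y i = x i}"
    then have a: "a \<in> configs n d" "\<And>i. i \<in> T \<Longrightarrow> a i = x i" by auto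
    show "?ov (?ov a w) x = a" using a(2) by (auto simp: override_on_def fun_eq_iff)
    show "?ov a w \<in> {y \<in> configs n d. \<forall>i\<in>T. y i = ?ov x w i}"
      using override_on_configs[OF a(1) w] by simp
    have "X (?ov x w) (?ov a w) = X x a"
      using identity_on_override[OF X x a(1) w] a(2) by metis
    moreover have "Y (?ov a w) (?ov z w) = Y a z"
      using identity_on_override[OF Y a(1) z w] a(2) xz by metis
    ultimately show "X (?ov x w) (?ov a w) * Y (?ov a w) (?ov z w) = X x a * Y a z" by simp
  next
    fix b assume "b \<in> {y \<in> configs n d. \<forall>i\<in>T. y i = ?ov x w i}"
    then have b: "b \<in> configs n d" "\<And>i. i \<in> T \<Longrightarrow> b i = w i" by auto
    show "?ov (?ov b x) w = b" using b(2) by (auto simp: override_on_def fun_eq_iff)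
    show "?ov b x \<in> {y \<in> configs n d. \<forall>i\<in>T. y i = x i}"
      using override_on_configs[OF b(1) x] by simp
  qed
  then show "op_mult n d X Y (?ov x w) (?ov z w) = op_mult n d X Y x z"
    using op_mult_eq_sum_fibre[OF X x] op_mult_eq_sum_fibre[OF X override_on_configs[OF x w]]
    by simp
qed

lemma identity_on_op_prod:
  "(\<And>i. i \<le> k \<Longrightarrow> identity_on n d T (F i)) \<Longrightarrow> identity_on n d T (op_prod n d F k)"
  by (induction k) (auto intro: identity_on_op_mult)

lemma acts_only_onE:
  assumes "acts_only_on n d S X"
  obtains a where "\<And>x y. x \<in> configs n d \<Longrightarrow> y \<in> configs n d \<Longrightarrow>
    X x y = (if \<forall>i<n. i \<notin> S \<longrightarrow> x i = y i
             then a (restrict x (S \<inter> {0..<n})) (restrict y (S \<inter> {0..<n})) else 0)"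
  using assms unfolding acts_only_on_def by blast

lemma acts_only_on_adjoint: "acts_only_on n d S X \<Longrightarrow> acts_only_on n d S (op_adjoint X)"
  unfolding acts_only_on_def op_adjoint_def
  by (elim exE, rule_tac x="\<lambda>u v. cnj (a v u)" in exI) auto

lemma acts_only_on_identity_on:
  assumes "acts_only_on n d S X" and "T \<inter> S = {}"
  shows "identity_on n d T X"
proof -
  obtain a where X: "\<And>x y. x \<in> configs n d \<Longrightarrow> y \<in> configs n d \<Longrightarrow>
    X x y = (if \<forall>i<n. i \<notin> S \<longrightarrow> x i = y i
             then a (restrict x (S \<inter> {0..<n})) (restrict y (S \<inter> {0..<n})) else 0)"
    using acts_only_onE[OF assms(1)] by blast
  show ?thesis unfolding identity_on_def
  proof (intro conjI ballI impI)
    fix x y assume x: "x \<in> configs n d" and y: "y \<in> configs n d" and "\<exists>i\<in>T. x i \<noteq> y i"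
    then obtain i where "i \<in> T" "x i \<noteq> y i" by blast
    moreover have "i < n" using \<open>x i \<noteq> y i\<close> configs_undefined x y by metis
    ultimately show "X x y = 0" using X[OF x y] assms(2) by auto
  next
    fix x y w assume x: "x \<in> configs n d" and y: "y \<in> configs n d" and w: "w \<in> configs n d"
      and xy: "\<forall>i\<in>T. x i = y i"
    have "restrict (override_on u w T) (S \<inter> {0..<n}) = restrict u (S \<inter> {0..<n})" for u
      using assms(2) by (auto simp: override_on_def restrict_def fun_eq_iff)
    moreover have "override_on x w T i = override_on y w T i \<longleftrightarrow> x i = y i" for i
      using xy by (auto simp: override_on_def)
    ultimately show "X (override_on x w T) (override_on y w T) = X x y"
      by (auto simp: X[OF override_on_configs[OF x w, of T] override_on_configs[OF y w, of T]] X[OF x y])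
  qed
qed

lemma trace_op_mult_diagonal:
  assumes X: "acts_only_on n d S X" and Z: "identity_on n d S Z"
  shows "trace_op n d (op_mult n d X Z) = (\<Sum>x\<in>configs n d. X x x * Z x x)"
proof -
  obtain a where Xa: "\<And>x y. x \<in> configs n d \<Longrightarrow> y \<in> configs n d \<Longrightarrow>
    X x y = (if \<forall>i<n. i \<notin> S \<longrightarrow> x i = y i
             then a (restrict x (S \<inter> {0..<n})) (restrict y (S \<inter> {0..<n})) else 0)"
    using acts_only_onE[OF X] by blast
  have off: "X x y * Z y x = 0" if x: "x \<in> configs n d" and y: "y \<in> configs n d" and "y \<noteq> x"
    for x y
  proof -
    obtain i where i: "i < n" "x i \<noteq> y i" using configs_neqE[OF x y] \<open>y \<noteq> x\<close> by metis
    then show ?thesis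
      using Xa[OF x y] identity_on_offdiag[OF Z y x, of i] by (cases "i \<in> S") auto
  qed
  have "(\<Sum>y\<in>configs n d. X x y * Z y x) = X x x * Z x x" if "x \<in> configs n d" for x
  proof -
    have "(\<Sum>y\<in>configs n d. X x y * Z y x) = (\<Sum>y\<in>configs n d. if y = x then X x x * Z x x else 0)"
      using off[OF that] by (intro sum.cong) auto
    then show ?thesis using that by simp
  qed
  then show ?thesis
    unfolding trace_op_def op_mult_def by simp
qed

text \<open>Exchanging the \<open>S\<close>-parts of two configurations shows
  \<open>d\<^sup>n \<Sum>\<^sub>x X\<^sub>x\<^sub>x Z\<^sub>x\<^sub>x = tr X \<cdot> tr Z\<close>.\<close>

lemma trace_op_mult_eq_0:
  assumes d: "d > 0" and X: "acts_only_on n d S X" and tr: "trace_op n d X = 0"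
    and Z: "identity_on n d S Z"
  shows "trace_op n d (op_mult n d X Z) = 0"
proof -
  let ?CF = "configs n d"
  obtain a where Xa: "\<And>x y. x \<in> ?CF \<Longrightarrow> y \<in> ?CF \<Longrightarrow>
    X x y = (if \<forall>i<n. i \<notin> S \<longrightarrow> x i = y i
             then a (restrict x (S \<inter> {0..<n})) (restrict y (S \<inter> {0..<n})) else 0)"
    using acts_only_onE[OF X] by blast
  define swap where "swap p = (override_on (snd p) (fst p) S, override_on (fst p) (snd p) S)" for p :: "config \<times> config"
  have "(\<Sum>p\<in>?CF \<times> ?CF. X (fst p) (fst p) * Z (snd p) (snd p)) =
      (\<Sum>p\<in>?CF \<times> ?CF. X (fst p) (fst p) * Z (fst p) (fst p))"
  proof (rule sum.reindex_bij_witness[where i=swap and j=swap])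
    fix p assume p: "p \<in> ?CF \<times> ?CF"
    have inv: "swap (swap p) = p"
      unfolding swap_def by (auto simp: override_on_def fun_eq_iff prod_eq_iff)
    have mem: "swap p \<in> ?CF \<times> ?CF"
      using p unfolding swap_def by (auto simp: override_on_configs)
    show "swap (swap p) = p" "swap p \<in> ?CF \<times> ?CF" "swap (swap p) = p" "swap p \<in> ?CF \<times> ?CF"
      using inv mem by blast+
    from p obtain x w where p: "p = (x, w)" and x: "x \<in> ?CF" and w: "w \<in> ?CF" by blast
    have "restrict (override_on w x S) (S \<inter> {0..<n}) = restrict x (S \<inter> {0..<n})"
      by (auto simp: override_on_def restrict_def fun_eq_iff)
    then have "X (override_on w x S) (override_on w x S) = X x x"
      using Xa[OF x x] Xa[OF override_on_configs[OF w x] override_on_configs[OF w x]] by simp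
    moreover have "Z (override_on w x S) (override_on w x S) = Z w w"
      using identity_on_override[OF Z w w x] by blast
    ultimately show "X (fst (swap p)) (fst (swap p)) * Z (fst (swap p)) (fst (swap p)) =
        X (fst p) (fst p) * Z (snd p) (snd p)"
      unfolding p swap_def by simp
  qed
  moreover have "(\<Sum>p\<in>?CF \<times> ?CF. X (fst p) (fst p) * Z (snd p) (snd p)) = trace_op n d X * trace_op n d Z"
    unfolding trace_op_def sum_product sum.cartesian_product by (simp add: case_prod_beta)
  moreover have "(\<Sum>p\<in>?CF \<times> ?CF. X (fst p) (fst p) * Z (fst p) (fst p)) =
      (\<Sum>x\<in>?CF. \<Sum>w\<in>?CF. X x x * Z x x)"
    by (simp only: sum.cartesian_product split_def)
  moreover have "\<dots> = of_nat (card ?CF) * (\<Sum>x\<in>?CF. X x x * Z x x)"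
    by (simp add: sum_distrib_left)
  ultimately have "of_nat (card ?CF) * (\<Sum>x\<in>?CF. X x x * Z x x) = 0" using tr by simp
  moreover have "card ?CF \<noteq> 0" using d by (simp add: card_configs)
  ultimately show ?thesis using trace_op_mult_diagonal[OF X Z] by simp
qed

section \<open>Lattice translations\<close>

lemma mod_add_add_complement:
  fixes i k n :: nat
  assumes "i < n"
  shows "(i + k + (n - k mod n)) mod n = i"
proof -
  have "k div n * n + k mod n = k" "k mod n < n" using assms by simp_all
  then have "i + k + (n - k mod n) = i + n + k div n * n"
    by linarith
  then show ?thesis using assms by simp
qed

lemma mod_add_right_inj:
  fixes i i' k n :: nat
  assumes "i < n" "i' < n" "(i + k) mod n = (i' + k) mod n"
  shows "i = i'"
  using mod_add_add_complement[OF assms(1), of k] mod_add_add_complement[OF assms(2), of k] assms(3)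
  by (metis mod_add_left_eq)

lemma mod_add_mem_image_iff:
  fixes i k n :: nat
  assumes "i < n"
  shows "(i + k) mod n \<in> (\<lambda>i. (i + k) mod n) ` (S \<inter> {0..<n}) \<longleftrightarrow> i \<in> S"
proof
  assume "(i + k) mod n \<in> (\<lambda>i. (i + k) mod n) ` (S \<inter> {0..<n})"
  then obtain i' where "i' \<in> S" "i' < n" "(i + k) mod n = (i' + k) mod n" by auto
  then show "i \<in> S" using mod_add_right_inj[OF assms] by metis
qed (use assms in auto)

lemma mod_add_surj:
  fixes i' k n :: nat
  assumes "i' < n"
  shows "\<exists>i<n. (i + k) mod n = i'"
proof (intro exI conjI)
  have "((i' + (n - k mod n)) mod n + k) mod n = (i' + k + (n - k mod n)) mod n"
    unfolding mod_add_left_eq by (simp only: add_ac)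
  then show "((i' + (n - k mod n)) mod n + k) mod n = i'"
    using mod_add_add_complement[OF assms] by simp
qed (use assms in simp)

text \<open>With \<open>\<sigma> = shift_config n k\<close> one has \<open>\<T>\<^sup>k \<psi> = \<psi> \<circ> \<sigma>\<close> (cf. \<open>translate\<close>), hence
  \<open>shift_op n k A = \<T>\<^sup>k A \<T>\<^sup>-\<^sup>k\<close>.\<close>

definition shift_config :: "nat \<Rightarrow> nat \<Rightarrow> config \<Rightarrow> config" where
  "shift_config n k x = (\<lambda>i\<in>{0..<n}. x ((i + k) mod n))"

definition shift_op :: "nat \<Rightarrow> nat \<Rightarrow> operator \<Rightarrow> operator" where
  "shift_op n k A = (\<lambda>x y. A (shift_config n k x) (shift_config n k y))"

lemma translate_eq_shift_config: "translate n \<psi> = (\<lambda>y. \<psi> (shift_config n 1 y))"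
  unfolding translate_def shift_config_def by simp

lemma shift_config_configs: "x \<in> configs n d \<Longrightarrow> shift_config n k x \<in> configs n d"
  unfolding configs_def shift_config_def by (auto simp: PiE_iff)

lemma shift_config_shift_config: "shift_config n j (shift_config n k x) = shift_config n (j + k) x"
  unfolding shift_config_def by (auto simp: fun_eq_iff mod_add_left_eq add.assoc)

lemma shift_config_complement:
  assumes "x \<in> configs n d"
  shows "shift_config n (k + (n - k mod n)) x = x"
proof
  fix i show "shift_config n (k + (n - k mod n)) x i = x i"
    using configs_undefined[OF assms, of i] mod_add_add_complement[of i n k]
    unfolding shift_config_def by (cases "i < n") (simp_all add: add.assoc)
qed

lemma shift_config_0: "x \<in> configs n d \<Longrightarrow> shift_config n 0 x = x"
  using configs_undefined[of x n d] unfolding shift_config_def by (auto simp: fun_eq_iff)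

lemma bij_betw_shift_config: "bij_betw (shift_config n k) (configs n d) (configs n d)"
proof (rule bij_betw_byWitness[where f'="shift_config n (n - k mod n)"])
  show "\<forall>x\<in>configs n d. shift_config n (n - k mod n) (shift_config n k x) = x"
    by (simp add: shift_config_shift_config shift_config_complement add.commute)
  show "\<forall>x\<in>configs n d. shift_config n k (shift_config n (n - k mod n) x) = x"
    by (simp add: shift_config_shift_config shift_config_complement)
qed (auto intro: shift_config_configs)

lemma sum_shift_config: "(\<Sum>x\<in>configs n d. f (shift_config n k x)) = (\<Sum>x\<in>configs n d. f x)"
  by (rule sum.reindex_bij_betw[OF bij_betw_shift_config])

lemma vnorm_shift_config: "vnorm n d (\<lambda>x. f (shift_config n k x)) = vnorm n d f"
  unfolding vnorm_def using sum_shift_config[of "\<lambda>x. (cmod (f x))\<^sup>2"] by simp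

lemma trace_shift_op: "trace_op n d (shift_op n k A) = trace_op n d A"
  unfolding trace_op_def shift_op_def by (rule sum_shift_config)

lemma eigenvector_shift_config:
  assumes "is_T_eigenvector n d \<psi>" and "vnorm n d \<psi> = 1"
  obtains \<mu> where "cmod \<mu> = 1" and "\<And>k y. y \<in> configs n d \<Longrightarrow> \<psi> (shift_config n k y) = \<mu> ^ k * \<psi> y"
proof -
  obtain \<mu> where \<mu>: "\<And>y. y \<in> configs n d \<Longrightarrow> \<psi> (shift_config n 1 y) = \<mu> * \<psi> y"
    using assms(1) unfolding is_T_eigenvector_def translate_eq_shift_config by blast
  have powers: "\<psi> (shift_config n k y) = \<mu> ^ k * \<psi> y" if "y \<in> configs n d" for k y
  proof (induction k)
    case 0
    show ?case using shift_config_0[OF that] by simp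
  next
    case (Suc k)
    have "\<psi> (shift_config n (Suc k) y) = \<psi> (shift_config n 1 (shift_config n k y))"
      by (simp add: shift_config_shift_config)
    also have "\<dots> = \<mu> ^ Suc k * \<psi> y"
      using \<mu>[OF shift_config_configs[OF that]] Suc by simp
    finally show ?case .
  qed
  have "1 = vnorm n d (\<lambda>y. \<psi> (shift_config n 1 y))" using assms(2) by (simp add: vnorm_shift_config)
  also have "\<dots> = vnorm n d (\<lambda>y. \<mu> * \<psi> y)" by (rule vnorm_cong) (use \<mu> in auto)
  also have "\<dots> = cmod \<mu>" using assms(2) by (simp add: vnorm_scaleC)
  finally show ?thesis using that powers by simp
qed

lemma diag_elem_shift_op:
  assumes "cmod \<mu> = 1" and \<psi>: "\<And>y. y \<in> configs n d \<Longrightarrow> \<psi> (shift_config n k y) = \<mu> ^ k * \<psi> y"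
  shows "diag_elem n d \<psi> (shift_op n k A) = diag_elem n d \<psi> A"
proof -
  let ?CF = "configs n d" and ?s = "shift_config n k"
  have unit: "cnj (\<mu> ^ k) * \<mu> ^ k = 1"
    using assms(1) cnj_mult_self[of "\<mu> ^ k"] by (simp add: norm_power)
  have "diag_elem n d \<psi> A = (\<Sum>x\<in>?CF. cnj (\<psi> (?s x)) * (\<Sum>y\<in>?CF. A (?s x) (?s y) * \<psi> (?s y)))"
    unfolding diag_elem_def inner_st_def apply_op_def
    by (subst sum_shift_config[symmetric], subst (2) sum_shift_config[symmetric]) (rule refl)
  also have "\<dots> = (\<Sum>x\<in>?CF. (cnj (\<mu> ^ k) * \<mu> ^ k) * (cnj (\<psi> x) * (\<Sum>y\<in>?CF. A (?s x) (?s y) * \<psi> y)))"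
    by (intro sum.cong refl) (simp add: \<psi> sum_distrib_left mult_ac)
  finally show ?thesis
    unfolding unit diag_elem_def inner_st_def apply_op_def shift_op_def by simp
qed

lemma apply_shift_op:
  "apply_op n d (shift_op n k A) (\<lambda>y. \<phi> (shift_config n k y)) =
     (\<lambda>x. apply_op n d A \<phi> (shift_config n k x))"
  unfolding apply_op_def shift_op_def
  using sum_shift_config[of "\<lambda>y. A (shift_config n k _) y * \<phi> y"] by simp

lemma vnorm_apply_shift_op_le:
  assumes "\<And>\<phi>. vnorm n d (apply_op n d A \<phi>) \<le> M * vnorm n d \<phi>"
  shows "vnorm n d (apply_op n d (shift_op n k A) \<psi>) \<le> M * vnorm n d \<psi>"
proof -
  define \<phi> where "\<phi> y = \<psi> (shift_config n (n - k mod n) y)" for y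
  have \<psi>: "\<psi> y = \<phi> (shift_config n k y)" if "y \<in> configs n d" for y
    unfolding \<phi>_def shift_config_shift_config
    using shift_config_complement[OF that, of k] by (simp add: add.commute)
  have "vnorm n d (apply_op n d (shift_op n k A) \<psi>) =
      vnorm n d (apply_op n d (shift_op n k A) (\<lambda>y. \<phi> (shift_config n k y)))"
    unfolding apply_op_def using \<psi> by (intro vnorm_cong) simp
  also have "\<dots> = vnorm n d (apply_op n d A \<phi>)"
    unfolding apply_shift_op by (rule vnorm_shift_config)
  also have "\<dots> \<le> M * vnorm n d \<phi>" by (rule assms)
  also have "vnorm n d \<phi> = vnorm n d \<psi>"
    using vnorm_shift_config[of n d \<phi> k] \<psi> vnorm_cong[of n d \<psi>] by metis
  finally show ?thesis .
qed

lemma acts_only_on_shift_op: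
  assumes A: "acts_only_on n d S A"
  shows "acts_only_on n d ((\<lambda>i. (i + k) mod n) ` (S \<inter> {0..<n})) (shift_op n k A)"
proof -
  define \<sigma> where "\<sigma> i = (i + k) mod n" for i
  define T where "T = \<sigma> ` (S \<inter> {0..<n})"
  obtain a where Aa: "\<And>x y. x \<in> configs n d \<Longrightarrow> y \<in> configs n d \<Longrightarrow>
    A x y = (if \<forall>i<n. i \<notin> S \<longrightarrow> x i = y i
             then a (restrict x (S \<inter> {0..<n})) (restrict y (S \<inter> {0..<n})) else 0)"
    using acts_only_onE[OF A] by blast
  have \<sigma>_less: "\<sigma> i < n" if "i < n" for i using that unfolding \<sigma>_def by simp
  have memb: "i \<in> S \<longleftrightarrow> \<sigma> i \<in> T" if "i < n" for i
    using mod_add_mem_image_iff[OF that] unfolding T_def \<sigma>_def by blast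
  have onto: "\<exists>i<n. \<sigma> i = i'" if "i' < n" for i'
    using mod_add_surj[OF that] unfolding \<sigma>_def .
  have shift: "shift_config n k x i = x (\<sigma> i)" if "i < n" for x i
    unfolding shift_config_def \<sigma>_def using that by simp
  have cond: "(\<forall>i<n. i \<notin> S \<longrightarrow> shift_config n k x i = shift_config n k y i) \<longleftrightarrow>
      (\<forall>i<n. i \<notin> T \<longrightarrow> x i = y i)" for x y
  proof
    assume L: "\<forall>i<n. i \<notin> S \<longrightarrow> shift_config n k x i = shift_config n k y i"
    show "\<forall>i<n. i \<notin> T \<longrightarrow> x i = y i"
    proof (intro allI impI)
      fix i' assume "i' < n" "i' \<notin> T"
      then obtain i where "i < n" "\<sigma> i = i'" using onto by blast
      then show "x i' = y i'" using L memb shift \<open>i' \<notin> T\<close> by metis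
    qed
  next
    assume "\<forall>i<n. i \<notin> T \<longrightarrow> x i = y i"
    then show "\<forall>i<n. i \<notin> S \<longrightarrow> shift_config n k x i = shift_config n k y i"
      using memb shift \<sigma>_less by metis
  qed
  have res: "restrict (shift_config n k x) (S \<inter> {0..<n}) =
      restrict (shift_config n k (restrict x (T \<inter> {0..<n}))) (S \<inter> {0..<n})" for x
  proof
    fix i
    show "restrict (shift_config n k x) (S \<inter> {0..<n}) i =
        restrict (shift_config n k (restrict x (T \<inter> {0..<n}))) (S \<inter> {0..<n}) i"
      using memb[of i] shift[of i] \<sigma>_less[of i] by auto
  qed
  show ?thesis
    unfolding acts_only_on_def \<sigma>_def[symmetric] T_def[symmetric]
  proof (rule exI[where x="\<lambda>u v. a (restrict (shift_config n k u) (S \<inter> {0..<n}))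
                                   (restrict (shift_config n k v) (S \<inter> {0..<n}))"], intro ballI)
    fix x y assume x: "x \<in> configs n d" and y: "y \<in> configs n d"
    show "shift_op n k A x y = (if \<forall>i<n. i \<notin> T \<longrightarrow> x i = y i
        then a (restrict (shift_config n k (restrict x (T \<inter> {0..<n}))) (S \<inter> {0..<n}))
               (restrict (shift_config n k (restrict y (T \<inter> {0..<n}))) (S \<inter> {0..<n})) else 0)"
      unfolding shift_op_def Aa[OF shift_config_configs[OF x] shift_config_configs[OF y]] cond res[of x] res[of y] ..
  qed
qed

section \<open>Norm bounds\<close>

lemma bdd_above_op_norm: "bdd_above ((\<lambda>\<psi>. vnorm n d (apply_op n d A \<psi>)) ` {\<psi>. vnorm n d \<psi> \<le> 1})"
proof (rule bdd_aboveI2)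
  fix \<psi> assume "\<psi> \<in> {\<psi>. vnorm n d \<psi> \<le> 1}"
  then have "cmod (\<psi> y) \<le> 1" if "y \<in> configs n d" for y
    using norm_le_vnorm[OF that, of \<psi>] by simp
  then have "cmod (apply_op n d A \<psi> x) \<le> (\<Sum>y\<in>configs n d. cmod (A x y))" for x
    unfolding apply_op_def
    by (intro order_trans[OF norm_sum] sum_mono) (simp add: norm_mult mult_left_le)
  then have "(\<Sum>x\<in>configs n d. (cmod (apply_op n d A \<psi> x))\<^sup>2) \<le>
      (\<Sum>x\<in>configs n d. (\<Sum>y\<in>configs n d. cmod (A x y))\<^sup>2)"
    by (intro sum_mono power_mono) auto
  then show "vnorm n d (apply_op n d A \<psi>) \<le> sqrt (\<Sum>x\<in>configs n d. (\<Sum>y\<in>configs n d. cmod (A x y))\<^sup>2)"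
    unfolding vnorm_def by simp
qed

lemma vnorm_apply_le_op_norm:
  assumes "op_norm n d A \<le> M"
  shows "vnorm n d (apply_op n d A \<psi>) \<le> M * vnorm n d \<psi>"
proof (cases "vnorm n d \<psi> = 0")
  case True
  then have "\<psi> y = 0" if "y \<in> configs n d" for y
    using norm_le_vnorm[OF that, of \<psi>] by simp
  then have "vnorm n d (apply_op n d A \<psi>) = 0"
    unfolding vnorm_def apply_op_def by simp
  then show ?thesis using True by simp
next
  case False
  define c where "c = vnorm n d \<psi>"
  have c: "c > 0" using False vnorm_nonneg[of n d \<psi>] unfolding c_def by linarith
  define \<phi> where "\<phi> = (\<lambda>x. complex_of_real (1 / c) * \<psi> x)"
  have "vnorm n d (apply_op n d A \<psi>) / c = vnorm n d (apply_op n d A \<phi>)"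
    unfolding \<phi>_def apply_op_scaleC vnorm_scaleC using c by (simp add: norm_divide)
  also have "\<dots> \<le> op_norm n d A"
    unfolding op_norm_def
  proof (rule cSUP_upper[OF _ bdd_above_op_norm])
    show "\<phi> \<in> {\<psi>. vnorm n d \<psi> \<le> 1}"
      unfolding mem_Collect_eq \<phi>_def vnorm_scaleC c_def[symmetric] using c by (simp add: norm_divide)
  qed
  also have "\<dots> \<le> M" by (rule assms)
  finally show ?thesis using c unfolding c_def by (simp add: field_simps)
qed

lemma vnorm_apply_adjoint_le:
  assumes M: "M \<ge> 0" and X: "\<And>\<phi>. vnorm n d (apply_op n d X \<phi>) \<le> M * vnorm n d \<phi>"
  shows "vnorm n d (apply_op n d (op_adjoint X) \<psi>) \<le> M * vnorm n d \<psi>"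
proof -
  define u where "u = apply_op n d (op_adjoint X) \<psi>"
  have "(vnorm n d u)\<^sup>2 = cmod (inner_st n d \<psi> (apply_op n d X u))"
    unfolding norm_inner_st_self[symmetric] u_def
    by (simp add: inner_st_adjoint[symmetric] inner_st_commute[of n d \<psi>])
  also have "\<dots> \<le> vnorm n d \<psi> * vnorm n d (apply_op n d X u)" by (rule inner_st_Cauchy_Schwarz)
  also have "\<dots> \<le> vnorm n d \<psi> * (M * vnorm n d u)" by (intro mult_left_mono X vnorm_nonneg)
  finally have "vnorm n d u * vnorm n d u \<le> (M * vnorm n d \<psi>) * vnorm n d u"
    by (simp add: power2_eq_square mult_ac)
  then show ?thesis
    using vnorm_nonneg[of n d u] M vnorm_nonneg[of n d \<psi>] unfolding u_def[symmetric]
    by (cases "vnorm n d u = 0") auto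
qed

lemma norm_trace_op_le:
  assumes "\<And>\<psi>. vnorm n d (apply_op n d Z \<psi>) \<le> B * vnorm n d \<psi>"
  shows "cmod (trace_op n d Z) \<le> real (d ^ n) * B"
proof -
  have "cmod (Z x x) \<le> B" if x: "x \<in> configs n d" for x
  proof -
    define e where "e y = (if y = x then 1 else 0 :: complex)" for y
    have "apply_op n d Z e x = Z x x"
      unfolding apply_op_def e_def using x by (simp add: if_distrib cong: if_cong)
    moreover have "vnorm n d e = 1"
      unfolding vnorm_def e_def using x by (simp add: if_distrib[of "\<lambda>z. (cmod z)\<^sup>2"] cong: if_cong)
    ultimately show ?thesis using norm_le_vnorm[OF x, of "apply_op n d Z e"] assms[of e] by simp
  qed
  then have "cmod (trace_op n d Z) \<le> (\<Sum>x\<in>configs n d. B)"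
    unfolding trace_op_def by (intro order_trans[OF norm_sum] sum_mono) auto
  also have "\<dots> = real (d ^ n) * B" by (simp add: card_configs)
  finally show ?thesis .
qed

section \<open>High moments of diagonal elements\<close>

fun gram_iter :: "nat \<Rightarrow> nat \<Rightarrow> operator \<Rightarrow> nat \<Rightarrow> operator" where
  "gram_iter n d G 0 = G"
| "gram_iter n d G (Suc m) = op_mult n d (op_adjoint (gram_iter n d G m)) (gram_iter n d G m)"

lemma norm_diag_power_le_gram_iter:
  assumes v: "vnorm n d v = 1"
  shows "cmod (inner_st n d v (apply_op n d G v)) ^ (2 ^ Suc m) \<le>
    (vnorm n d (apply_op n d (gram_iter n d G m) v))\<^sup>2"
proof (induction m)
  case 0
  have "cmod (inner_st n d v (apply_op n d G v)) \<le> vnorm n d (apply_op n d G v)"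
    using inner_st_Cauchy_Schwarz[of n d v "apply_op n d G v"] v by simp
  then show ?case by (simp add: power_mono)
next
  case (Suc m)
  let ?W = "gram_iter n d G m" and ?z = "cmod (inner_st n d v (apply_op n d G v))"
  have "(vnorm n d (apply_op n d ?W v))\<^sup>2 =
      cmod (inner_st n d v (apply_op n d (gram_iter n d G (Suc m)) v))"
    by (simp add: norm_inner_st_self[symmetric] inner_st_adjoint apply_op_mult)
  also have "\<dots> \<le> vnorm n d (apply_op n d (gram_iter n d G (Suc m)) v)"
    using inner_st_Cauchy_Schwarz[of n d v] v by (metis mult_1)
  finally have step: "(vnorm n d (apply_op n d ?W v))\<^sup>2 \<le> vnorm n d (apply_op n d (gram_iter n d G (Suc m)) v)" .
  have "?z ^ (2 ^ Suc (Suc m)) = (?z ^ (2 ^ Suc m))\<^sup>2"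
    by (simp add: power_mult[symmetric] mult.commute)
  also have "\<dots> \<le> ((vnorm n d (apply_op n d ?W v))\<^sup>2)\<^sup>2"
    by (rule power_mono[OF Suc.IH]) simp
  also have "\<dots> \<le> (vnorm n d (apply_op n d (gram_iter n d G (Suc m)) v))\<^sup>2"
    by (rule power_mono[OF step]) simp
  finally show ?case .
qed

lemma gram_iter_eq_op_prod:
  "\<exists>\<beta>. gram_iter n d G m = op_prod n d (\<lambda>i. if \<beta> i then op_adjoint G else G) (2 ^ m - 1)"
proof (induction m)
  case 0
  show ?case by (rule exI[of _ "\<lambda>_. False"]) simp
next
  case (Suc m)
  then obtain \<beta> where \<beta>: "gram_iter n d G m = op_prod n d (\<lambda>i. if \<beta> i then op_adjoint G else G) (2 ^ m - 1)"
    by blast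
  define k where "k = (2::nat) ^ m - 1"
  define \<beta>' where "\<beta>' i \<longleftrightarrow> (if i \<le> k then \<not> \<beta> (k - i) else \<beta> (i - Suc k))" for i
  have len: "2 ^ Suc m - 1 = k + Suc k" unfolding k_def by (simp add: Suc_diff_le)
  have "gram_iter n d G (Suc m) =
      op_mult n d (op_prod n d (\<lambda>i. op_adjoint (if \<beta> (k - i) then op_adjoint G else G)) k)
        (op_prod n d (\<lambda>i. if \<beta> i then op_adjoint G else G) k)"
    unfolding gram_iter.simps \<beta> op_adjoint_prod k_def ..
  also have "\<dots> = op_prod n d (\<lambda>i. if \<beta>' i then op_adjoint G else G) (2 ^ Suc m - 1)"
    unfolding op_mult_op_prod len \<beta>'_def by (intro op_prod_cong) auto
  finally show ?case by blast
qed

lemma Bessel_inequality: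
  fixes D :: nat and b :: "nat \<Rightarrow> state"
  assumes on: "\<forall>j<D. \<forall>k<D. inner_st n d (b j) (b k) = (if j = k then 1 else 0)"
  shows "(\<Sum>j<D. (cmod (inner_st n d (b j) w))\<^sup>2) \<le> (vnorm n d w)\<^sup>2"
proof -
  define c where "c j = inner_st n d (b j) w" for j
  define s where "s = (\<lambda>y. \<Sum>j<D. c j * b j y)"
  define N where "N = (\<Sum>j<D. cnj (c j) * c j)"
  have N: "N = complex_of_real (\<Sum>j<D. (cmod (c j))\<^sup>2)"
    unfolding N_def of_real_sum by (simp add: cnj_mult_self)
  have bs: "inner_st n d (b j) s = c j" if "j < D" for j
  proof -
    have "inner_st n d (b j) s = (\<Sum>k<D. if k = j then c j else 0)"
      unfolding s_def inner_st_sum_right inner_st_scaleC_right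
      using on that by (intro sum.cong refl) auto
    then show ?thesis using that by simp
  qed
  have "inner_st n d w s = N"
    unfolding s_def inner_st_sum_right inner_st_scaleC_right N_def
    by (intro sum.cong refl) (simp add: c_def inner_st_commute[of n d w] mult.commute)
  moreover have "inner_st n d s w = N"
    unfolding s_def inner_st_sum_left inner_st_scaleC_left N_def c_def ..
  moreover have "inner_st n d s s = N"
    unfolding N_def by (subst (1) s_def) (simp add: inner_st_sum_left inner_st_scaleC_left bs)
  ultimately have "inner_st n d (\<lambda>y. w y - s y) (\<lambda>y. w y - s y) = inner_st n d w w - N"
    unfolding inner_st_diff_left inner_st_diff_right by simp
  then have "complex_of_real ((vnorm n d (\<lambda>y. w y - s y))\<^sup>2) =
      complex_of_real ((vnorm n d w)\<^sup>2 - (\<Sum>j<D. (cmod (c j))\<^sup>2))"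
    unfolding inner_st_self N by simp
  then have "(vnorm n d (\<lambda>y. w y - s y))\<^sup>2 = (vnorm n d w)\<^sup>2 - (\<Sum>j<D. (cmod (c j))\<^sup>2)"
    using of_real_eq_iff by blast
  then show ?thesis unfolding c_def using zero_le_power2[of "vnorm n d (\<lambda>y. w y - s y)"] by linarith
qed

lemma sum_vnorm_apply_orthonormal_le:
  fixes D :: nat and b :: "nat \<Rightarrow> state"
  assumes on: "\<forall>j<D. \<forall>k<D. inner_st n d (b j) (b k) = (if j = k then 1 else 0)"
  shows "(\<Sum>j<D. (vnorm n d (apply_op n d W (b j)))\<^sup>2) \<le>
    (\<Sum>x\<in>configs n d. \<Sum>y\<in>configs n d. (cmod (W x y))\<^sup>2)"
proof -
  define row where "row x y = cnj (W x y)" for x y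
  have "apply_op n d W (b j) x = cnj (inner_st n d (b j) (row x))" for j x
    unfolding apply_op_def inner_st_def row_def by (simp add: mult.commute)
  then have "(\<Sum>j<D. (vnorm n d (apply_op n d W (b j)))\<^sup>2) =
      (\<Sum>x\<in>configs n d. \<Sum>j<D. (cmod (inner_st n d (b j) (row x)))\<^sup>2)"
    unfolding vnorm_power2 by (simp add: sum.swap[of _ "{..<D}"])
  also have "\<dots> \<le> (\<Sum>x\<in>configs n d. (vnorm n d (row x))\<^sup>2)"
    by (intro sum_mono Bessel_inequality[OF on])
  also have "\<dots> = (\<Sum>x\<in>configs n d. \<Sum>y\<in>configs n d. (cmod (W x y))\<^sup>2)"
    unfolding vnorm_power2 row_def by simp
  finally show ?thesis .
qed

definition repeated_words :: "nat \<Rightarrow> 'a set \<Rightarrow> (nat \<Rightarrow> 'a) set" where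
  "repeated_words p K = {\<tau> \<in> {0..<p} \<rightarrow>\<^sub>E K. \<forall>i<p. \<exists>j<p. j \<noteq> i \<and> \<tau> j = \<tau> i}"

definition first_occurrences :: "(nat \<Rightarrow> 'a) \<Rightarrow> nat \<Rightarrow> nat set" where
  "first_occurrences \<tau> p = {i. i < p \<and> (\<forall>j<i. \<tau> j \<noteq> \<tau> i)}"

text \<open>A word is determined by its letters at first occurrences together with, at every other
  position, a pointer to the first occurrence of its letter.\<close>

definition occurrence_code :: "(nat \<Rightarrow> 'a) \<Rightarrow> nat \<Rightarrow> nat \<Rightarrow> 'a + nat" where
  "occurrence_code \<tau> p =
     (\<lambda>i\<in>{0..<p}. if i \<in> first_occurrences \<tau> p then Inl (\<tau> i) else Inr (LEAST j. \<tau> j = \<tau> i))"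

lemma first_occurrence_Least:
  assumes "i < p"
  shows "(LEAST j. \<tau> j = \<tau> i) \<in> first_occurrences \<tau> p" and "\<tau> (LEAST j. \<tau> j = \<tau> i) = \<tau> i"
proof -
  show eq: "\<tau> (LEAST j. \<tau> j = \<tau> i) = \<tau> i" by (rule LeastI[of _ i]) simp
  have "(LEAST j. \<tau> j = \<tau> i) \<le> i" by (rule Least_le) simp
  moreover have "\<tau> j \<noteq> \<tau> (LEAST j. \<tau> j = \<tau> i)" if "j < (LEAST j. \<tau> j = \<tau> i)" for j
    using not_less_Least[OF that] eq by simp
  ultimately show "(LEAST j. \<tau> j = \<tau> i) \<in> first_occurrences \<tau> p"
    unfolding first_occurrences_def using assms by simp
qed

lemma inj_on_first_occurrences: "inj_on \<tau> (first_occurrences \<tau> p)"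
proof (rule inj_onI)
  fix i i' assume "i \<in> first_occurrences \<tau> p" "i' \<in> first_occurrences \<tau> p" "\<tau> i = \<tau> i'"
  then show "i = i'" unfolding first_occurrences_def by (cases i i' rule: linorder_cases) auto
qed

lemma card_first_occurrences_le_card:
  assumes "\<tau> \<in> {0..<p} \<rightarrow>\<^sub>E K" and "finite K"
  shows "card (first_occurrences \<tau> p) \<le> card K"
proof -
  have "card (first_occurrences \<tau> p) = card (\<tau> ` first_occurrences \<tau> p)"
    by (rule card_image[OF inj_on_first_occurrences, symmetric])
  also have "\<dots> \<le> card K"
    using assms by (intro card_mono) (auto simp: first_occurrences_def PiE_iff)
  finally show ?thesis .
qed

text \<open>Each first occurrence is matched injectively with a later repetition of its letter.\<close>

lemma card_first_occurrences_repeated_words: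
  assumes \<tau>: "\<tau> \<in> repeated_words p K"
  shows "2 * card (first_occurrences \<tau> p) \<le> p"
proof -
  let ?F = "first_occurrences \<tau> p"
  have "\<forall>i\<in>?F. \<exists>j. j < p \<and> j \<noteq> i \<and> \<tau> j = \<tau> i"
    using \<tau> unfolding repeated_words_def first_occurrences_def by auto
  then obtain g where g: "\<And>i. i \<in> ?F \<Longrightarrow> g i < p \<and> g i \<noteq> i \<and> \<tau> (g i) = \<tau> i"
    by metis
  have "g i \<in> {0..<p} - ?F" if "i \<in> ?F" for i
  proof -
    have "\<not> g i < i" using g[OF that] that unfolding first_occurrences_def by auto
    then have "i < g i" using g[OF that] by simp
    then show ?thesis using g[OF that] unfolding first_occurrences_def by auto
  qed
  moreover have "inj_on g ?F"
  proof (rule inj_onI)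
    fix i i' assume "i \<in> ?F" "i' \<in> ?F" "g i = g i'"
    then show "i = i'" using g inj_onD[OF inj_on_first_occurrences] by metis
  qed
  ultimately have "card ?F \<le> card ({0..<p} - ?F)"
    by (intro card_inj_on_le) auto
  also have "\<dots> = p - card ?F"
    by (simp add: card_Diff_subset finite_subset first_occurrences_def subset_eq)
  finally show ?thesis by simp
qed

lemma occurrence_code_PiE:
  assumes "\<tau> \<in> {0..<p} \<rightarrow>\<^sub>E K"
  shows "occurrence_code \<tau> p \<in>
    Pi\<^sub>E {0..<p} (\<lambda>i. if i \<in> first_occurrences \<tau> p then Inl ` K else Inr ` first_occurrences \<tau> p)"
  unfolding occurrence_code_def using assms first_occurrence_Least[of _ p \<tau>] by (auto simp: PiE_iff)

lemma inj_on_occurrence_code: "inj_on (\<lambda>\<tau>. occurrence_code \<tau> p) (extensional {0..<p})"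
proof (rule inj_onI)
  fix \<tau> \<tau>' assume \<tau>: "\<tau> \<in> extensional {0..<p}" and \<tau>': "\<tau>' \<in> extensional {0..<p}"
    and code: "occurrence_code \<tau> p = occurrence_code \<tau>' p"
  have firsts: "i \<in> first_occurrences \<tau> p \<longleftrightarrow> i \<in> first_occurrences \<tau>' p" if "i < p" for i
    using fun_cong[OF code, of i] that unfolding occurrence_code_def by (auto split: if_splits)
  have on_firsts: "\<tau> i = \<tau>' i" if "i \<in> first_occurrences \<tau> p" for i
    using fun_cong[OF code, of i] that firsts[of i] unfolding occurrence_code_def first_occurrences_def
    by auto
  show "\<tau> = \<tau>'"
  proof
    fix i
    consider "\<not> i < p" | "i \<in> first_occurrences \<tau> p" | "i < p" "i \<notin> first_occurrences \<tau> p"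
      by blast
    then show "\<tau> i = \<tau>' i"
    proof cases
      case 1
      then show ?thesis using \<tau> \<tau>' by (simp add: extensional_def)
    next
      case 2
      then show ?thesis by (rule on_firsts)
    next
      case 3
      then have least: "(LEAST j. \<tau> j = \<tau> i) = (LEAST j. \<tau>' j = \<tau>' i)"
        using fun_cong[OF code, of i] firsts[of i] unfolding occurrence_code_def by simp
      have "\<tau> i = \<tau> (LEAST j. \<tau> j = \<tau> i)" using first_occurrence_Least(2)[OF 3(1), of \<tau>] by simp
      also have "\<dots> = \<tau>' (LEAST j. \<tau> j = \<tau> i)" by (rule on_firsts[OF first_occurrence_Least(1)[OF 3(1)]])
      also have "\<dots> = \<tau>' i" unfolding least by (rule first_occurrence_Least(2)[OF 3(1)])
      finally show ?thesis .
    qed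
  qed
qed

lemma card_occurrence_code_space:
  fixes K :: "'a set"
  assumes "F \<subseteq> {0..<p}"
  shows "card (Pi\<^sub>E {0..<p} (\<lambda>i. if i \<in> F then Inl ` K else Inr ` F)) =
    card K ^ card F * card F ^ (p - card F)"
proof -
  have "card (Pi\<^sub>E {0..<p} (\<lambda>i. if i \<in> F then Inl ` K else Inr ` F)) =
      (\<Prod>i\<in>{0..<p}. card (if i \<in> F then Inl ` K else Inr ` F))"
    by (rule card_PiE) simp
  also have "\<dots> = (\<Prod>i\<in>{0..<p}. if i \<in> F then card K else card F)"
    by (rule prod.cong) (auto simp: card_image)
  also have "\<dots> = (\<Prod>i\<in>F. card K) * (\<Prod>i\<in>{0..<p} - F. card F)"
    using assms by (simp add: prod.If_cases Int_absorb1 Diff_eq[symmetric])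
  also have "\<dots> = card K ^ card F * card F ^ (p - card F)"
    using assms by (simp add: card_Diff_subset finite_subset)
  finally show ?thesis .
qed

lemma power_mult_power_le:
  fixes m f q :: nat
  assumes "f \<le> q" "f \<le> m"
  shows "m ^ f * f ^ (2 * q - f) \<le> (m * q) ^ q"
proof -
  have "m ^ f * f ^ (2 * q - f) = (m * f) ^ f * (f * f) ^ (q - f)"
    using assms by (simp add: power_mult_distrib power_add[symmetric] mult_2)
  also have "\<dots> \<le> (m * f) ^ f * (m * f) ^ (q - f)"
    using assms by (intro mult_le_mono2 power_mono) auto
  also have "\<dots> = (m * f) ^ q" using assms by (simp add: power_add[symmetric])
  also have "\<dots> \<le> (m * q) ^ q" using assms by (intro power_mono) auto
  finally show ?thesis .
qed

lemma card_repeated_words_le: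
  assumes K: "finite K"
  shows "card (repeated_words (2 * q) K) \<le> 4 ^ q * (card K * q) ^ q"
proof -
  define p where "p = 2 * q"
  define B where "B F = Pi\<^sub>E {0..<p} (\<lambda>i. if i \<in> F then Inl ` K else Inr ` F)" for F
  define Fs where "Fs = {F. F \<subseteq> {0..<p} \<and> card F \<le> q \<and> card F \<le> card K}"
  have "Fs \<subseteq> Pow {0..<p}" unfolding Fs_def by auto
  then have Fs: "finite Fs" "card Fs \<le> 2 ^ p"
    using finite_subset card_mono[of "Pow {0..<p}" Fs] by (auto simp: card_Pow)
  have "card (repeated_words p K) = card ((\<lambda>\<tau>. occurrence_code \<tau> p) ` repeated_words p K)"
    by (rule card_image[symmetric], rule inj_on_subset[OF inj_on_occurrence_code])
       (auto simp: repeated_words_def PiE_iff)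
  also have "\<dots> \<le> card (\<Union>F\<in>Fs. B F)"
  proof (rule card_mono)
    have "finite F" if "F \<in> Fs" for F
      using that finite_subset[of F "{0..<p}"] unfolding Fs_def by simp
    then show "finite (\<Union>F\<in>Fs. B F)"
      using Fs K unfolding B_def by (auto intro!: finite_PiE)
    show "(\<lambda>\<tau>. occurrence_code \<tau> p) ` repeated_words p K \<subseteq> (\<Union>F\<in>Fs. B F)"
    proof (intro image_subsetI UN_I)
      fix \<tau> assume \<tau>: "\<tau> \<in> repeated_words p K"
      then have \<tau>': "\<tau> \<in> {0..<p} \<rightarrow>\<^sub>E K" unfolding repeated_words_def by simp
      have "2 * card (first_occurrences \<tau> p) \<le> p"
        by (rule card_first_occurrences_repeated_words[OF \<tau>])
      moreover have "card (first_occurrences \<tau> p) \<le> card K"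
        by (rule card_first_occurrences_le_card[OF \<tau>' K])
      moreover have "first_occurrences \<tau> p \<subseteq> {0..<p}"
        by (auto simp: first_occurrences_def)
      ultimately show "first_occurrences \<tau> p \<in> Fs" unfolding Fs_def p_def by simp
      show "occurrence_code \<tau> p \<in> B (first_occurrences \<tau> p)"
        unfolding B_def by (rule occurrence_code_PiE) fact
    qed
  qed
  also have "\<dots> \<le> (\<Sum>F\<in>Fs. card (B F))" by (rule card_UN_le[OF Fs(1)])
  also have "\<dots> \<le> (\<Sum>F\<in>Fs. (card K * q) ^ q)"
  proof (rule sum_mono)
    fix F assume "F \<in> Fs"
    then have F: "F \<subseteq> {0..<p}" "card F \<le> q" "card F \<le> card K" unfolding Fs_def by auto
    show "card (B F) \<le> (card K * q) ^ q"
      using power_mult_power_le[of "card F" q "card K"] F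
      unfolding B_def card_occurrence_code_space[OF F(1)] by (simp add: p_def)
  qed
  also have "\<dots> \<le> 2 ^ p * (card K * q) ^ q" using Fs(2) by simp
  also have "\<dots> = 4 ^ q * (card K * q) ^ q" unfolding p_def by (simp add: power_mult)
  finally show ?thesis unfolding p_def .
qed

text \<open>A product of local operators has zero trace as soon as one traceless factor has a support
  disjoint from the supports of all other factors: cycle that factor to the front.\<close>

lemma trace_op_prod_eq_0:
  assumes d: "d > 0" and i: "i \<le> k"
    and local: "\<And>j. j \<le> k \<Longrightarrow> acts_only_on n d (S j) (Y j)"
    and traceless: "trace_op n d (Y i) = 0"
    and disjoint: "\<And>j. j \<le> k \<Longrightarrow> j \<noteq> i \<Longrightarrow> S i \<inter> S j = {}"
  shows "trace_op n d (op_prod n d Y k) = 0"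
proof (cases k)
  case 0
  then show ?thesis using i traceless by simp
next
  case (Suc k')
  define F where "F l = Y ((l + i) mod Suc k)" for l
  have F0: "F 0 = Y i" unfolding F_def using i by simp
  have "identity_on n d (S i) (F (Suc l))" if "l \<le> k'" for l
  proof -
    define j where "j = (Suc l + i) mod Suc k"
    have "j \<noteq> i"
    proof
      assume "j = i"
      then have "(Suc l + i) mod Suc k = (0 + i) mod Suc k" unfolding j_def using i by simp
      then show False using mod_add_right_inj[of "Suc l" "Suc k" 0 i] that Suc by simp
    qed
    moreover have "j \<le> k" unfolding j_def using less_Suc_eq_le by auto
    ultimately show ?thesis
      unfolding F_def j_def[symmetric] using acts_only_on_identity_on local disjoint by blast
  qed
  then have "trace_op n d (op_mult n d (F 0) (op_prod n d (\<lambda>l. F (Suc l)) k')) = 0"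
    using local[OF i] traceless unfolding F0
    by (intro trace_op_mult_eq_0[OF d] identity_on_op_prod) auto
  moreover have "trace_op n d (op_prod n d Y k) = trace_op n d (op_prod n d F k)"
    unfolding F_def by (rule trace_op_prod_rotate)
  moreover have "op_prod n d F k = op_mult n d (F 0) (op_prod n d (\<lambda>l. F (Suc l)) k')"
    unfolding Suc by (rule op_prod_Suc_left)
  ultimately show ?thesis by simp
qed

lemma trace_word_eq_0:
  fixes K :: "'k set" and Y :: "nat \<Rightarrow> 'k \<Rightarrow> operator" and S :: "'k \<Rightarrow> nat set"
  assumes d: "d > 0" and \<tau>: "\<tau> \<in> ({0..<Suc k} \<rightarrow>\<^sub>E K) - repeated_words (Suc k) K"
    and local: "\<And>i t. t \<in> K \<Longrightarrow> acts_only_on n d (S t) (Y i t)"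
    and traceless: "\<And>i t. t \<in> K \<Longrightarrow> trace_op n d (Y i t) = 0"
    and disjoint: "\<And>t t'. t \<in> K \<Longrightarrow> t' \<in> K \<Longrightarrow> t \<noteq> t' \<Longrightarrow> S t \<inter> S t' = {}"
  shows "trace_op n d (op_prod n d (\<lambda>i. Y i (\<tau> i)) k) = 0"
proof -
  obtain i where i: "i \<le> k" and single: "\<And>j. j \<le> k \<Longrightarrow> j \<noteq> i \<Longrightarrow> \<tau> j \<noteq> \<tau> i"
    using \<tau> unfolding repeated_words_def by (auto simp: less_Suc_eq_le)
  have \<tau>K: "\<tau> j \<in> K" if "j \<le> k" for j using \<tau> that by (auto simp: PiE_iff)
  show ?thesis
  proof (rule trace_op_prod_eq_0[OF d i, where S="\<lambda>j. S (\<tau> j)"])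
    show "acts_only_on n d (S (\<tau> j)) (Y j (\<tau> j))" if "j \<le> k" for j
      using local \<tau>K[OF that] .
    show "trace_op n d (Y i (\<tau> i)) = 0" using traceless \<tau>K[OF i] .
    show "S (\<tau> i) \<inter> S (\<tau> j) = {}" if "j \<le> k" "j \<noteq> i" for j
      using disjoint[OF \<tau>K[OF i] \<tau>K[OF that(1)]] single[OF that] by auto
  qed
qed

lemma norm_trace_word_le:
  fixes K :: "'k set" and X :: "'k \<Rightarrow> operator" and S :: "'k \<Rightarrow> nat set"
  assumes d: "d > 0" and K: "finite K" and M: "M \<ge> 0"
    and local: "\<And>t. t \<in> K \<Longrightarrow> acts_only_on n d (S t) (X t)"
    and traceless: "\<And>t. t \<in> K \<Longrightarrow> trace_op n d (X t) = 0"
    and bounded: "\<And>t \<psi>. t \<in> K \<Longrightarrow> vnorm n d (apply_op n d (X t) \<psi>) \<le> M * vnorm n d \<psi>"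
    and disjoint: "\<And>t t'. t \<in> K \<Longrightarrow> t' \<in> K \<Longrightarrow> t \<noteq> t' \<Longrightarrow> S t \<inter> S t' = {}"
  shows "cmod (trace_op n d (op_prod n d (\<lambda>i. if \<beta> i then op_adjoint (op_sum K X) else op_sum K X) k))
    \<le> real (card (repeated_words (Suc k) K)) * (real (d ^ n) * M ^ Suc k)"
proof -
  define Y where "Y i t = (if \<beta> i then op_adjoint (X t) else X t)" for i t
  define f where "f \<tau> = trace_op n d (op_prod n d (\<lambda>i. Y i (\<tau> i)) k)" for \<tau>
  have word_local: "acts_only_on n d (S t) (Y i t)" and word_traceless: "trace_op n d (Y i t) = 0"
    and word_bounded: "vnorm n d (apply_op n d (Y i t) \<psi>) \<le> M * vnorm n d \<psi>"
    if "t \<in> K" for i t \<psi>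
    using local[OF that] traceless[OF that] bounded[OF that] vnorm_apply_adjoint_le[OF M bounded[OF that]]
    unfolding Y_def by (auto simp: acts_only_on_adjoint trace_op_adjoint)
  have word: "(\<lambda>i. if \<beta> i then op_adjoint (op_sum K X) else op_sum K X) = (\<lambda>i. op_sum K (Y i))"
    unfolding Y_def op_adjoint_sum by (auto simp: fun_eq_iff op_sum_def)
  have "trace_op n d (op_prod n d (\<lambda>i. if \<beta> i then op_adjoint (op_sum K X) else op_sum K X) k) =
      (\<Sum>\<tau>\<in>{0..<Suc k} \<rightarrow>\<^sub>E K. f \<tau>)"
    unfolding word op_prod_op_sum trace_op_sum f_def atLeastLessThanSuc_atLeastAtMost ..
  also have "\<dots> = (\<Sum>\<tau>\<in>repeated_words (Suc k) K. f \<tau>)"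
  proof (rule sum.mono_neutral_right)
    show "\<forall>\<tau>\<in>({0..<Suc k} \<rightarrow>\<^sub>E K) - repeated_words (Suc k) K. f \<tau> = 0"
      unfolding f_def using trace_word_eq_0[OF d _ word_local word_traceless disjoint] by (rule ballI)
  qed (auto simp: repeated_words_def K finite_PiE)
  finally have "cmod (trace_op n d (op_prod n d (\<lambda>i. if \<beta> i then op_adjoint (op_sum K X) else op_sum K X) k))
      \<le> (\<Sum>\<tau>\<in>repeated_words (Suc k) K. cmod (f \<tau>))"
    by (simp add: norm_sum)
  also have "\<dots> \<le> (\<Sum>\<tau>\<in>repeated_words (Suc k) K. real (d ^ n) * M ^ Suc k)"
  proof (rule sum_mono)
    fix \<tau> assume "\<tau> \<in> repeated_words (Suc k) K"
    then have "\<tau> j \<in> K" if "j \<le> k" for j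
      using that unfolding repeated_words_def by (auto simp: PiE_iff)
    then show "cmod (f \<tau>) \<le> real (d ^ n) * M ^ Suc k"
      unfolding f_def by (intro norm_trace_op_le vnorm_apply_op_prod_le[OF M] word_bounded)
  qed
  finally show ?thesis by simp
qed

lemma moment_op_sum_le:
  fixes K :: "'k set" and X :: "'k \<Rightarrow> operator" and S :: "'k \<Rightarrow> nat set" and D :: nat
    and b :: "nat \<Rightarrow> state"
  assumes d: "d > 0" and K: "finite K" and M: "M \<ge> 0"
    and local: "\<And>t. t \<in> K \<Longrightarrow> acts_only_on n d (S t) (X t)"
    and traceless: "\<And>t. t \<in> K \<Longrightarrow> trace_op n d (X t) = 0"
    and bounded: "\<And>t \<psi>. t \<in> K \<Longrightarrow> vnorm n d (apply_op n d (X t) \<psi>) \<le> M * vnorm n d \<psi>"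
    and disjoint: "\<And>t t'. t \<in> K \<Longrightarrow> t' \<in> K \<Longrightarrow> t \<noteq> t' \<Longrightarrow> S t \<inter> S t' = {}"
    and on: "\<forall>j<D. \<forall>k<D. inner_st n d (b j) (b k) = (if j = k then 1 else 0)"
  shows "(\<Sum>j<D. cmod (diag_elem n d (b j) (op_sum K X)) ^ (2 * 2 ^ m))
     \<le> real (4 ^ 2 ^ m * (card K * 2 ^ m) ^ 2 ^ m) * (real (d ^ n) * M ^ (2 * 2 ^ m))"
proof -
  let ?G = "op_sum K X"
  let ?W = "gram_iter n d ?G m"
  obtain \<beta> where \<beta>: "gram_iter n d ?G (Suc m) =
      op_prod n d (\<lambda>i. if \<beta> i then op_adjoint ?G else ?G) (2 * 2 ^ m - 1)"
    using gram_iter_eq_op_prod[of n d ?G "Suc m"] by auto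
  have "(\<Sum>j<D. cmod (diag_elem n d (b j) ?G) ^ (2 * 2 ^ m)) \<le> (\<Sum>j<D. (vnorm n d (apply_op n d ?W (b j)))\<^sup>2)"
  proof (rule sum_mono)
    fix j assume "j \<in> {..<D}"
    then have "vnorm n d (b j) = 1" using on by (simp add: vnorm_eq_1)
    from norm_diag_power_le_gram_iter[OF this, of ?G m]
    show "cmod (diag_elem n d (b j) ?G) ^ (2 * 2 ^ m) \<le> (vnorm n d (apply_op n d ?W (b j)))\<^sup>2"
      unfolding diag_elem_def by simp
  qed
  also have "\<dots> \<le> (\<Sum>x\<in>configs n d. \<Sum>y\<in>configs n d. (cmod (?W x y))\<^sup>2)"
    by (rule sum_vnorm_apply_orthonormal_le[OF on])
  also have "\<dots> \<le> cmod (trace_op n d (gram_iter n d ?G (Suc m)))"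
    unfolding gram_iter.simps trace_op_adjoint_mult_self norm_of_real by simp
  also have "\<dots> \<le> real (card (repeated_words (2 * 2 ^ m) K)) * (real (d ^ n) * M ^ (2 * 2 ^ m))"
    using norm_trace_word_le[OF d K M local traceless bounded disjoint, where \<beta>=\<beta> and k="2 * 2 ^ m - 1"]
    unfolding \<beta> by simp
  also have "\<dots> \<le> real (4 ^ 2 ^ m * (card K * 2 ^ m) ^ 2 ^ m) * (real (d ^ n) * M ^ (2 * 2 ^ m))"
    using card_repeated_words_le[OF K, of "2 ^ m"] M
    by (intro mult_right_mono) (simp_all only: of_nat_le_iff, auto)
  finally show ?thesis .
qed

lemma card_ge_mult_power_le_sum:
  fixes a :: "nat \<Rightarrow> real"
  assumes "\<eta> > 0" and "\<And>j. a j \<ge> 0"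
  shows "real (card {j. j < D \<and> \<eta> \<le> a j}) * \<eta> ^ p \<le> (\<Sum>j<D. a j ^ p)"
proof -
  have "real (card {j. j < D \<and> \<eta> \<le> a j}) * \<eta> ^ p = (\<Sum>j\<in>{j. j < D \<and> \<eta> \<le> a j}. \<eta> ^ p)" by simp
  also have "\<dots> \<le> (\<Sum>j\<in>{j. j < D \<and> \<eta> \<le> a j}. a j ^ p)"
    using assms by (intro sum_mono power_mono) auto
  also have "\<dots> \<le> (\<Sum>j<D. a j ^ p)"
    using assms by (intro sum_mono2) auto
  finally show ?thesis .
qed

lemma ex_power2_between:
  fixes x :: real
  assumes "x \<ge> 1"
  obtains m where "2 ^ m \<le> x" and "x < 2 ^ Suc m"
proof -
  obtain k where "x < 2 ^ k" using real_arch_pow[of 2 x] by auto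
  then have ex: "\<exists>m. x < 2 ^ Suc m" by (intro exI[of _ k]) (simp add: order_less_le_trans)
  define m where "m = (LEAST m. x < 2 ^ Suc m)"
  have "x < 2 ^ Suc m" unfolding m_def by (rule LeastI_ex[OF ex])
  moreover have "2 ^ m \<le> x"
  proof (cases m)
    case (Suc m')
    then have "\<not> x < 2 ^ Suc m'" unfolding m_def by (metis lessI not_less_Least)
    then show ?thesis using Suc by simp
  qed (use assms in simp)
  ultimately show ?thesis using that by blast
qed

text \<open>Optimising the Markov bound over the moment \<open>2q\<close>: for \<open>q \<approx> y / e\<close> one has
  \<open>(q / y)\<^sup>q \<le> e\<^sup>-\<^sup>q\<close>.\<close>

lemma moment_tail_le_exp:
  fixes C D y :: real and q :: nat
  assumes moment: "C * y ^ q \<le> D * real q ^ q" and D: "D \<ge> 0"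
    and lower: "exp 1 * q \<le> y" and upper: "y < 2 * exp 1 * q"
  shows "C \<le> D * exp (- y / (2 * exp 1))"
proof -
  have "q > 0" using lower upper by (cases "q = 0") auto
  then have "exp 1 * q > 0" by simp
  then have y: "y > 0" using lower by linarith
  have "C \<le> D * (real q / y) ^ q" using moment y by (simp add: field_simps)
  also have "\<dots> \<le> D * (1 / exp 1) ^ q"
    using lower y D by (intro mult_left_mono power_mono) (simp_all add: field_simps)
  also have "(1 / exp 1) ^ q = exp (- real q)"
    using exp_of_nat_mult[of q "- 1 :: real"] by (simp add: exp_minus inverse_eq_divide)
  also have "exp (- real q) \<le> exp (- y / (2 * exp 1))"
    using upper by (simp add: field_simps)
  finally show ?thesis using D by (simp add: mult_left_mono)
qed

lemma card_large_diag_op_sum_le: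
  fixes K :: "'k set" and X :: "'k \<Rightarrow> operator" and S :: "'k \<Rightarrow> nat set" and D :: nat
    and b :: "nat \<Rightarrow> state"
  assumes d: "d > 0" and K: "finite K" and M: "M > 0"
    and local: "\<And>t. t \<in> K \<Longrightarrow> acts_only_on n d (S t) (X t)"
    and traceless: "\<And>t. t \<in> K \<Longrightarrow> trace_op n d (X t) = 0"
    and bounded: "\<And>t \<psi>. t \<in> K \<Longrightarrow> vnorm n d (apply_op n d (X t) \<psi>) \<le> M * vnorm n d \<psi>"
    and disjoint: "\<And>t t'. t \<in> K \<Longrightarrow> t' \<in> K \<Longrightarrow> t \<noteq> t' \<Longrightarrow> S t \<inter> S t' = {}"
    and on: "\<forall>j<D. \<forall>k<D. inner_st n d (b j) (b k) = (if j = k then 1 else 0)"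
    and N: "card K \<le> N" "N > 0" and \<eta>: "\<eta> > 0" "4 * exp 1 * N * M\<^sup>2 \<le> \<eta>\<^sup>2"
  shows "real (card {j. j < D \<and> \<eta> \<le> cmod (diag_elem n d (b j) (op_sum K X))})
    \<le> real (d ^ n) * exp (- \<eta>\<^sup>2 / (8 * exp 1 * N * M\<^sup>2))"
proof -
  define y where "y = \<eta>\<^sup>2 / (4 * N * M\<^sup>2)"
  have "y / exp 1 \<ge> 1" using \<eta>(2) N(2) M unfolding y_def by (simp add: field_simps)
  then obtain m where m: "2 ^ m \<le> y / exp 1" "y / exp 1 < 2 ^ Suc m" by (rule ex_power2_between)
  define q :: nat where "q = 2 ^ m"
  let ?count = "real (card {j. j < D \<and> \<eta> \<le> cmod (diag_elem n d (b j) (op_sum K X))})"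
  have "?count * \<eta> ^ (2 * q) \<le> (\<Sum>j<D. cmod (diag_elem n d (b j) (op_sum K X)) ^ (2 * q))"
    by (rule card_ge_mult_power_le_sum[OF \<eta>(1)]) simp
  also have "\<dots> \<le> real (4 ^ q * (card K * q) ^ q) * (real (d ^ n) * M ^ (2 * q))"
    unfolding q_def by (rule moment_op_sum_le[OF d K _ local traceless bounded disjoint on]) (use M in simp)
  also have "\<dots> = real (d ^ n) * (4 * card K * M\<^sup>2) ^ q * real q ^ q"
    unfolding power_mult[of M 2 q] by (simp add: power_mult_distrib mult_ac)
  also have "\<dots> \<le> real (d ^ n) * (4 * N * M\<^sup>2) ^ q * real q ^ q"
    using N by (intro mult_right_mono mult_left_mono power_mono) auto
  finally have "?count * (\<eta>\<^sup>2) ^ q \<le> real (d ^ n) * real q ^ q * (4 * N * M\<^sup>2) ^ q"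
    unfolding power_mult[of \<eta> 2 q] by (simp only: mult_ac)
  moreover have "(4 * N * M\<^sup>2) ^ q > 0" using N(2) M by simp
  ultimately have "?count * y ^ q \<le> real (d ^ n) * real q ^ q"
    unfolding y_def power_divide by (simp add: pos_divide_le_eq)
  then have "?count \<le> real (d ^ n) * exp (- y / (2 * exp 1))"
    by (rule moment_tail_le_exp) (use m in \<open>simp_all add: q_def field_simps\<close>)
  also have "- y / (2 * exp 1) = - \<eta>\<^sup>2 / (8 * exp 1 * N * M\<^sup>2)"
    unfolding y_def by (simp add: field_simps)
  finally show ?thesis .
qed

section \<open>Translates of a local operator\<close>

text \<open>Windows \<open>{t, \<dots>, t + r - 1}\<close> that do not wrap around are grouped by \<open>t mod r\<close>, so that windows
  in one group are at least \<open>r\<close> apart; each of the fewer than \<open>r\<close> wrapping windows gets a class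
  of its own.\<close>

definition window_class :: "nat \<Rightarrow> nat \<Rightarrow> nat \<Rightarrow> nat" where
  "window_class n r t = (if t + r \<le> n then t mod r else r + (t + r - n))"

lemma window_class_less: "r \<ge> 1 \<Longrightarrow> t < n \<Longrightarrow> window_class n r t < 2 * r"
  unfolding window_class_def by (auto intro: less_le_trans[OF mod_less_divisor])

lemma windows_disjoint_if_apart:
  fixes t t' r n :: nat
  assumes "t + r \<le> n" "t' + r \<le> n" "t + r \<le> t'"
  shows "{(t + j) mod n | j. j < r} \<inter> {(t' + j) mod n | j. j < r} = {}"
proof -
  have "(t + j) mod n \<noteq> (t' + j') mod n" if "j < r" "j' < r" for j j'
    using that assms by simp
  then show ?thesis by blast
qed

lemma windows_disjoint:
  assumes r: "r \<ge> 1" and t: "t < n" "t' < n" and "t \<noteq> t'"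
    and same: "window_class n r t = window_class n r t'"
  shows "{(t + j) mod n | j. j < r} \<inter> {(t' + j) mod n | j. j < r} = {}"
proof (cases "t + r \<le> n \<and> t' + r \<le> n")
  case True
  have apart: "a + r \<le> b" if "a < b" "a mod r = b mod r" for a b :: nat
  proof -
    have "r dvd b - a" using that mod_eq_dvd_iff_nat[of a b r] by auto
    then show ?thesis using that r by (auto dest: dvd_imp_le)
  qed
  have "t mod r = t' mod r" using same True unfolding window_class_def by simp
  then consider "t + r \<le> t'" | "t' + r \<le> t" using apart \<open>t \<noteq> t'\<close> by (metis linorder_neqE_nat)
  then show ?thesis
    using windows_disjoint_if_apart[of t r n t'] windows_disjoint_if_apart[of t' r n t] True
    by cases auto
next
  case False
  have "window_class n r u < r \<longleftrightarrow> u + r \<le> n" for u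
    using r unfolding window_class_def by auto
  then have "\<not> t + r \<le> n" "\<not> t' + r \<le> n" using False same by metis+
  then have "t = t'" using same t unfolding window_class_def by simp
  then show ?thesis using \<open>t \<noteq> t'\<close> by simp
qed

lemma diag_elem_shift_op_eigenvector:
  assumes "is_T_eigenvector n d \<psi>" and "vnorm n d \<psi> = 1"
  shows "diag_elem n d \<psi> (shift_op n k A) = diag_elem n d \<psi> A"
  using eigenvector_shift_config[OF assms] diag_elem_shift_op by metis

lemma ex_large_summand:
  fixes z :: "nat \<Rightarrow> complex"
  assumes "R > 0" and "c \<le> cmod (\<Sum>g<R. z g)"
  shows "\<exists>g<R. c / R \<le> cmod (z g)"
proof (rule ccontr)
  assume "\<not> ?thesis"
  then have "cmod (\<Sum>g<R. z g) < (\<Sum>g<R. c / R)"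
    using assms(1) by (intro le_less_trans[OF norm_sum] sum_strict_mono) (auto simp: not_le)
  then show False using assms by simp
qed

lemma shift_window:
  fixes s t k n :: nat
  assumes "s < n"
  shows "(\<lambda>i. (i + (t + n - s)) mod n) ` ({(s + k) mod n | k. k < r} \<inter> {0..<n}) =
    {(t + k) mod n | k. k < r}"
proof -
  have "((s + k) mod n + (t + n - s)) mod n = (t + k) mod n" for k
  proof -
    have "((s + k) mod n + (t + n - s)) mod n = (s + k + (t + n - s)) mod n" by (simp add: mod_add_left_eq)
    also have "s + k + (t + n - s) = t + k + n" using assms by simp
    finally show ?thesis by simp
  qed
  moreover have "{(s + k) mod n | k. k < r} \<inter> {0..<n} = (\<lambda>k. (s + k) mod n) ` {..<r}"
    using assms by auto
  ultimately show ?thesis by (auto simp: image_image)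
qed

definition translates_in_class :: "nat \<Rightarrow> nat \<Rightarrow> nat \<Rightarrow> operator \<Rightarrow> nat \<Rightarrow> operator" where
  "translates_in_class n r s A g =
     op_sum {t \<in> {..<n}. window_class n r t = g} (\<lambda>t. shift_op n (t + n - s) A)"

lemma diag_elem_eq_sum_translates_in_class:
  assumes r: "r \<ge> 1" and "is_T_eigenvector n d \<psi>" and "vnorm n d \<psi> = 1"
  shows "n * diag_elem n d \<psi> A = (\<Sum>g<2 * r. diag_elem n d \<psi> (translates_in_class n r s A g))"
proof -
  have "n * diag_elem n d \<psi> A = (\<Sum>t<n. diag_elem n d \<psi> (shift_op n (t + n - s) A))"
    using assms by (simp add: diag_elem_shift_op_eigenvector)
  also have "\<dots> = (\<Sum>g<2 * r. \<Sum>t\<in>{t \<in> {..<n}. window_class n r t = g}.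
      diag_elem n d \<psi> (shift_op n (t + n - s) A))"
    by (rule sum.group[symmetric]) (use window_class_less[OF r] in auto)
  finally show ?thesis unfolding translates_in_class_def diag_elem_op_sum .
qed

lemma card_large_diag_translates_in_class_le:
  fixes M \<eta> :: real and D :: nat and b :: "nat \<Rightarrow> state"
  assumes d: "d > 0" and r: "r \<ge> 1" and M: "M > 0" and s: "s < n"
    and local: "acts_only_on n d {(s + k) mod n | k. k < r} A" and traceless: "trace_op n d A = 0"
    and norm: "op_norm n d A \<le> M"
    and on: "\<forall>j<D. \<forall>k<D. inner_st n d (b j) (b k) = (if j = k then 1 else 0)"
    and \<eta>: "\<eta> > 0" "4 * exp 1 * n * M\<^sup>2 \<le> \<eta>\<^sup>2"
  shows "real (card {j. j < D \<and> \<eta> \<le> cmod (diag_elem n d (b j) (translates_in_class n r s A g))})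
    \<le> real (d ^ n) * exp (- \<eta>\<^sup>2 / (8 * exp 1 * n * M\<^sup>2))"
  unfolding translates_in_class_def
proof (rule card_large_diag_op_sum_le[where S="\<lambda>t. {(t + k) mod n | k. k < r}", OF d _ M _ _ _ _ on _ _ \<eta>])
  let ?K = "{t \<in> {..<n}. window_class n r t = g}"
  show "acts_only_on n d {(t + k) mod n | k. k < r} (shift_op n (t + n - s) A)" for t
    using acts_only_on_shift_op[OF local, of "t + n - s"] unfolding shift_window[OF s] .
  show "trace_op n d (shift_op n (t + n - s) A) = 0" for t
    unfolding trace_shift_op by (rule traceless)
  show "vnorm n d (apply_op n d (shift_op n (t + n - s) A) \<psi>) \<le> M * vnorm n d \<psi>" for t \<psi>
    by (rule vnorm_apply_shift_op_le[OF vnorm_apply_le_op_norm[OF norm]])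
  show "{(t + k) mod n | k. k < r} \<inter> {(t' + k) mod n | k. k < r} = {}"
    if "t \<in> ?K" "t' \<in> ?K" "t \<noteq> t'" for t t'
    using that windows_disjoint[OF r] by auto
  have "card ?K \<le> card {..<n}" by (rule card_mono) auto
  then show "card ?K \<le> n" by simp
qed (use s in simp_all)

lemma card_large_diag_elem_le:
  fixes d r n :: nat and M \<delta> :: real and b :: "nat \<Rightarrow> state"
  assumes d: "d \<ge> 2" and r: "r \<ge> 1" and M: "M > 0" and n: "2 * r \<le> n"
    and on: "\<forall>j<d^n. \<forall>k<d^n. inner_st n d (b j) (b k) = (if j = k then 1 else 0)"
    and eig: "\<forall>j<d^n. is_T_eigenvector n d (b j)"
    and local: "r_local n d r A" and traceless: "trace_op n d A = 0" and norm: "op_norm n d A \<le> M"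
    and \<delta>: "\<delta> > 0" "4 * exp 1 * M\<^sup>2 * (2 * r)\<^sup>2 \<le> n * \<delta>\<^sup>2"
  shows "real (card {j. j < d^n \<and> cmod (diag_elem n d (b j) A) \<ge> \<delta>}) \<le>
    2 * r * d ^ n * exp (- n * \<delta>\<^sup>2 / (8 * exp 1 * M\<^sup>2 * (2 * r)\<^sup>2))"
proof -
  obtain s where s: "s < n" and As: "acts_only_on n d {(s + k) mod n | k. k < r} A"
    using local unfolding r_local_def by blast
  define large where "large g = {j. j < d^n \<and>
    n * \<delta> / (2 * r) \<le> cmod (diag_elem n d (b j) (translates_in_class n r s A g))}" for g
  have "{j. j < d^n \<and> cmod (diag_elem n d (b j) A) \<ge> \<delta>} \<subseteq> (\<Union>g<2 * r. large g)"
  proof safe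
    fix j assume j: "j < d^n" and "\<delta> \<le> cmod (diag_elem n d (b j) A)"
    then have "n * \<delta> \<le> cmod (n * diag_elem n d (b j) A)" by (simp add: norm_mult mult_left_mono)
    also have "n * diag_elem n d (b j) A =
        (\<Sum>g<2 * r. diag_elem n d (b j) (translates_in_class n r s A g))"
      using diag_elem_eq_sum_translates_in_class[OF r] eig on j by (simp add: vnorm_eq_1)
    finally obtain g where "g < 2 * r"
      "n * \<delta> / (2 * r) \<le> cmod (diag_elem n d (b j) (translates_in_class n r s A g))"
      using ex_large_summand[of "2 * r"] r by auto
    then show "j \<in> (\<Union>g<2 * r. large g)" unfolding large_def using j by blast
  qed
  then have "card {j. j < d^n \<and> cmod (diag_elem n d (b j) A) \<ge> \<delta>} \<le> (\<Sum>g<2 * r. card (large g))"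
    by (intro order_trans[OF card_mono card_UN_le]) (auto simp: large_def)
  then have "real (card {j. j < d^n \<and> cmod (diag_elem n d (b j) A) \<ge> \<delta>}) \<le>
      (\<Sum>g<2 * r. real (card (large g)))"
    unfolding of_nat_sum[symmetric] by (rule of_nat_mono)
  also have "\<dots> \<le> (\<Sum>g<2 * r. real (d ^ n) * exp (- (n * \<delta> / (2 * r))\<^sup>2 / (8 * exp 1 * n * M\<^sup>2)))"
    unfolding large_def using d r M s As traceless norm on \<delta>
    by (intro sum_mono card_large_diag_translates_in_class_le) (auto simp: field_simps power2_eq_square)
  also have "\<dots> = 2 * r * d ^ n * exp (- n * \<delta>\<^sup>2 / (8 * exp 1 * M\<^sup>2 * (2 * r)\<^sup>2))"
    using n r by (simp add: field_simps power2_eq_square)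
  finally show ?thesis .
qed

lemma threshold_consequences:
  fixes C \<delta> :: real and n :: nat
  assumes C: "C > 0" and n: "n \<ge> 3" and \<delta>: "\<delta> \<ge> sqrt C * sqrt (ln n / n)"
  shows "\<delta> > 0" and "C \<le> C * ln n" and "C * ln n \<le> n * \<delta>\<^sup>2"
proof -
  have "exp 1 \<le> real n" using exp_le n by linarith
  then have "1 \<le> ln n" using n by (subst ln_ge_iff) auto
  then show ln: "C \<le> C * ln n" using C by simp
  then have pos: "sqrt C * sqrt (ln n / n) > 0" using C n by simp
  then show "\<delta> > 0" using \<delta> by linarith
  have "(sqrt C * sqrt (ln n / n))\<^sup>2 \<le> \<delta>\<^sup>2" using \<delta> pos by (intro power_mono) auto
  moreover have "ln n / n \<ge> 0" using \<open>1 \<le> ln n\<close> by simp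
  ultimately have "C * (ln n / n) \<le> \<delta>\<^sup>2" using C by (simp add: power_mult_distrib)
  then show "C * ln n \<le> n * \<delta>\<^sup>2" using n by (simp add: field_simps)
qed

lemma mult_exp_le_exp:
  fixes R x :: real and n :: nat
  assumes "0 < R" "R \<le> n" "ln n \<le> x"
  shows "R * exp (- 2 * x) \<le> exp (- x)"
proof -
  have "R \<le> exp (ln n)" using assms by simp
  also have "\<dots> \<le> exp x" using assms(3) by (rule exp_mono)
  finally have "R \<le> exp x" .
  then have "R * exp (- 2 * x) \<le> exp x * exp (- 2 * x)" by (simp add: mult_right_mono)
  also have "\<dots> = exp (- x)" by (simp flip: exp_add)
  finally show ?thesis .
qed

theorem lemma3:
  fixes d r :: nat and M :: real
  assumes "d \<ge> 2" and "r \<ge> 1" and "M > 0"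
  shows "\<exists>C>0. \<exists>c>0. \<exists>N::nat. \<forall>n\<ge>N.
    \<forall>(b :: nat \<Rightarrow> (nat \<Rightarrow> nat) \<Rightarrow> complex)
     (A :: (nat \<Rightarrow> nat) \<Rightarrow> (nat \<Rightarrow> nat) \<Rightarrow> complex) (\<delta>::real).
      (\<forall>j<d^n. \<forall>k<d^n. inner_st n d (b j) (b k) = (if j = k then 1 else 0)) \<longrightarrow>
      (\<forall>j<d^n. is_T_eigenvector n d (b j)) \<longrightarrow>
      r_local n d r A \<longrightarrow> trace_op n d A = 0 \<longrightarrow> op_norm n d A \<le> M \<longrightarrow>
      \<delta> \<ge> C * sqrt (ln (real n) / real n) \<longrightarrow>
      real (card {j. j < d^n \<and> cmod (diag_elem n d (b j) A) \<ge> \<delta>}) / real (d^n)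
        \<le> exp (- c * real n * \<delta>\<^sup>2)"
proof -
  define C where "C = 16 * exp 1 * M\<^sup>2 * (2 * r)\<^sup>2"
  have C: "C > 0" using assms unfolding C_def by simp
  show ?thesis
  proof (rule exI[of _ "sqrt C"], intro conjI exI[of _ "1 / C"] exI[of _ "2 * r + 3"] allI impI)
    fix n b A \<delta>
    assume n: "n \<ge> 2 * r + 3"
      and hyps: "\<forall>j<d^n. \<forall>k<d^n. inner_st n d (b j) (b k) = (if j = k then 1 else 0)"
        "\<forall>j<d^n. is_T_eigenvector n d (b j)" "r_local n d r A" "trace_op n d A = 0" "op_norm n d A \<le> M"
      and \<delta>: "\<delta> \<ge> sqrt C * sqrt (ln (real n) / real n)"
    note th = threshold_consequences[OF C _ \<delta>]
    have "4 * exp 1 * M\<^sup>2 * (2 * r)\<^sup>2 \<le> C" unfolding C_def by simp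
    then have "4 * exp 1 * M\<^sup>2 * (2 * r)\<^sup>2 \<le> n * \<delta>\<^sup>2" using th n by linarith
    moreover have "n * \<delta>\<^sup>2 / (8 * exp 1 * M\<^sup>2 * (2 * r)\<^sup>2) = 2 * (n * \<delta>\<^sup>2 / C)"
      unfolding C_def by (simp add: field_simps)
    ultimately have "real (card {j. j < d^n \<and> cmod (diag_elem n d (b j) A) \<ge> \<delta>}) \<le>
        2 * r * d ^ n * exp (- 2 * (n * \<delta>\<^sup>2 / C))"
      using card_large_diag_elem_le[OF assms _ hyps, of \<delta>] th n by simp
    also have "\<dots> \<le> d ^ n * exp (- (n * \<delta>\<^sup>2 / C))"
      using mult_exp_le_exp[of "2 * r" n "n * \<delta>\<^sup>2 / C"] th n C assms
      by (simp add: field_simps mult_left_mono)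
    finally show "real (card {j. j < d^n \<and> cmod (diag_elem n d (b j) A) \<ge> \<delta>}) / real (d^n)
        \<le> exp (- (1 / C) * real n * \<delta>\<^sup>2)"
      using assms by (simp add: field_simps)
  qed (use C in simp_all)
qed

end
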